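(* Let $\mathrm{M}$ be a 2-space group of type $\ast2222$ (IT number 6, $pmm$) such that the flat orbifold $E^2/\mathrm{M}$ (a rectangle) is a square. Let m-ref. be the reflection of the square in a line joining midpoints of opposite sides and d-ref. the reflection in a diagonal. Then $\mathrm{Sym}(\mathrm{M})$ is the dihedral group $\langle \text{m-ref.}, \text{d-ref.}\rangle$ of order 8, $\mathrm{Sym}(\mathrm{M})=\mathrm{Aff}(\mathrm{M})$, and $\Omega:\mathrm{Aff}(\mathrm{M})\to\mathrm{Out}(\mathrm{M})$ is an isomorphism.
   Context: A 2-space group is a discrete group of isometries of $E^2$ with compact quotient. Affine maps of $E^2$ are written $a+A$ ($x\mapsto a+Ax$). For a 2-space group $\mathrm{M}$, let $N_A(\mathrm{M})$ be its normalizer in the affine group of $E^2$; each $a+A\in N_A(\mathrm{M})$ induces an affinity $(a+A)_\star:\mathrm{M}x\mapsto\mathrm{M}(a+Ax)$ of the flat orbifold $E^2/\mathrm{M}$. $\mathrm{Aff}(\mathrm{M})$ is the group of all such affinities and $\mathrm{Sym}(\mathrm{M})=\mathrm{Isom}(E^2/\mathrm{M})$ its subgroup of isometries. $\Omega:\mathrm{Aff}(\mathrm{M})\to\mathrm{Out}(\mathrm{M})$ sends $(a+A)_\star$ to the outer automorphism class of $g\mapsto(a+A)g(a+A)^{-1}$ on $\mathrm{M}$. *)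

theory Defs
  imports "HOL-Analysis.Analysis" "HOL-Algebra.Algebra"
begin

type_synonym pt = "real ^ 2"
type_synonym emap = "pt \<Rightarrow> pt"

definition affine_auto :: "emap \<Rightarrow> bool" where
  "affine_auto f \<longleftrightarrow> (\<exists>(a::pt) (A::real^2^2). invertible A \<and> f = (\<lambda>x. a + A *v x))"

definition isometry :: "emap \<Rightarrow> bool" where
  "isometry f \<longleftrightarrow> surj f \<and> (\<forall>x y. dist (f x) (f y) = dist x y)"

definition map_group :: "emap set \<Rightarrow> emap monoid" where
  "map_group M = \<lparr>carrier = M, mult = (\<circ>), one = id\<rparr>"

definition conj :: "emap \<Rightarrow> emap \<Rightarrow> emap" where
  "conj \<alpha> g = \<alpha> \<circ> g \<circ> inv_into UNIV \<alpha>"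

definition space_group2 :: "emap set \<Rightarrow> bool" where
  "space_group2 M \<longleftrightarrow>
     (\<forall>g\<in>M. isometry g) \<and>
     id \<in> M \<and> (\<forall>g\<in>M. \<forall>h\<in>M. g \<circ> h \<in> M) \<and> (\<forall>g\<in>M. inv_into UNIV g \<in> M) \<and>
     \<comment> \<open>discrete\<close>
     (\<forall>K. compact K \<longrightarrow> finite {g\<in>M. g ` K \<inter> K \<noteq> {}}) \<and>
     \<comment> \<open>compact quotient\<close>
     (\<exists>K. compact K \<and> (\<Union>g\<in>M. g ` K) = UNIV)"

text \<open>The standard group pmm (type *2222): generated by the reflections in the
  lines x1 = 0, x1 = 1, x2 = 0, x2 = 1.\<close>
definition pmm_std :: "emap set" where
  "pmm_std = {(\<lambda>x. vector [e1 * x$1 + 2 * of_int m, e2 * x$2 + 2 * of_int n]) | e1 e2 m n.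
                 e1 \<in> {1, -1} \<and> e2 \<in> {1, -1}}"

definition type_pmm :: "emap set \<Rightarrow> bool" where
  "type_pmm M \<longleftrightarrow> (\<exists>\<phi>. affine_auto \<phi> \<and> M = conj \<phi> ` pmm_std)"

definition NA :: "emap set \<Rightarrow> emap set" where
  "NA M = {\<alpha>. affine_auto \<alpha> \<and> conj \<alpha> ` M = M}"

definition orb :: "emap set \<Rightarrow> pt \<Rightarrow> pt set" where
  "orb M x = (\<lambda>g. g x) ` M"

definition OrbSp :: "emap set \<Rightarrow> pt set set" where
  "OrbSp M = range (orb M)"

definition indaff :: "emap set \<Rightarrow> emap \<Rightarrow> (pt set \<Rightarrow> pt set)" where
  "indaff M \<alpha> = (\<lambda>Ob \<in> OrbSp M. orb M (\<alpha> (SOME x. x \<in> Ob)))"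

definition Aff :: "emap set \<Rightarrow> (pt set \<Rightarrow> pt set) set" where
  "Aff M = indaff M ` NA M"

definition qdist :: "pt set \<Rightarrow> pt set \<Rightarrow> real" where
  "qdist Ob Ob2 = Inf {dist x y | x y. x \<in> Ob \<and> y \<in> Ob2}"

definition Sym :: "emap set \<Rightarrow> (pt set \<Rightarrow> pt set) set" where
  "Sym M = {F \<in> Aff M. \<forall>Ob\<in>OrbSp M. \<forall>Ob2\<in>OrbSp M. qdist (F Ob) (F Ob2) = qdist Ob Ob2}"

definition AffG :: "emap set \<Rightarrow> (pt set \<Rightarrow> pt set) monoid" where
  "AffG M = \<lparr>carrier = Aff M, mult = (\<lambda>F G. \<lambda>Ob \<in> OrbSp M. F (G Ob)),
             one = (\<lambda>Ob \<in> OrbSp M. Ob)\<rparr>"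

definition inn :: "('a, 'b) monoid_scheme \<Rightarrow> ('a \<Rightarrow> 'a) set" where
  "inn G = {(\<lambda>x \<in> carrier G. a \<otimes>\<^bsub>G\<^esub> x \<otimes>\<^bsub>G\<^esub> inv\<^bsub>G\<^esub> a) | a. a \<in> carrier G}"

definition OutG :: "('a, 'b) monoid_scheme \<Rightarrow> ('a \<Rightarrow> 'a) set monoid" where
  "OutG G = AutoGroup G Mod inn G"

definition Omega_nrm :: "emap set \<Rightarrow> emap \<Rightarrow> (emap \<Rightarrow> emap) set" where
  "Omega_nrm M \<alpha> = r_coset (AutoGroup (map_group M)) (inn (map_group M)) (\<lambda>g \<in> M. conj \<alpha> g)"

definition Omega :: "emap set \<Rightarrow> (pt set \<Rightarrow> pt set) \<Rightarrow> (emap \<Rightarrow> emap) set" where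
  "Omega M F = Omega_nrm M (SOME \<alpha>. \<alpha> \<in> NA M \<and> indaff M \<alpha> = F)"

text \<open>Reflection of E^2 in the line through p with unit direction w.\<close>
definition refl_line :: "pt \<Rightarrow> pt \<Rightarrow> emap" where
  "refl_line p w = (\<lambda>x. p + (2 * ((x - p) \<bullet> w)) *\<^sub>R w - (x - p))"

text \<open>The closed square with centre c, orthonormal side directions u, v, half side s.\<close>
definition square :: "pt \<Rightarrow> pt \<Rightarrow> pt \<Rightarrow> real \<Rightarrow> pt set" where
  "square c u v s = {c + a *\<^sub>R u + b *\<^sub>R v | a b. \<bar>a\<bar> \<le> s \<and> \<bar>b\<bar> \<le> s}"

text \<open>E^2/M is the square S: S is a fundamental domain (meets every orbit, and
  distinct interior points lie in distinct orbits).\<close>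
definition quotient_is_square :: "emap set \<Rightarrow> pt \<Rightarrow> pt \<Rightarrow> pt \<Rightarrow> real \<Rightarrow> bool" where
  "quotient_is_square M c u v s \<longleftrightarrow>
     norm u = 1 \<and> norm v = 1 \<and> u \<bullet> v = 0 \<and> s > 0 \<and>
     orb M ` square c u v s = OrbSp M \<and>
     (\<forall>x\<in>interior (square c u v s). \<forall>y\<in>interior (square c u v s). orb M x = orb M y \<longrightarrow> x = y)"

end

(* After an affine change of coordinates M becomes the standard pmm, generated by the reflections
   in the lines x1 = m and x2 = n (m, n integers).  Its affine normalizer consists of the isometries
   of the lattice of integer points, and every automorphism of pmm is conjugation by such an
   isometry, because an automorphism must preserve the two families of parallel reflections and act
   on each of them by an affine bijection of the integers.

   The hypothesis that the quotient is a square fixes the change of coordinates: in the new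
   coordinates the square is mapped onto a closed unit cell, and comparing corners shows that this
   map is a similarity whose linear part is a signed permutation.  Modulo M every element of the
   normalizer is therefore one of the eight symmetries of the square, and these induce eight distinct
   isometries of the quotient, generated by the two reflections.  Omega is injective because the
   centralizer of pmm among affine maps is trivial, and surjective because every automorphism comes
   from the normalizer. *)

theory Submission
  imports Defs
begin


section \<open>Affine maps of the plane in coordinates\<close>

definition affmap :: "real \<Rightarrow> real \<Rightarrow> real \<Rightarrow> real \<Rightarrow> real \<Rightarrow> real \<Rightarrow> emap" where
  "affmap p q r t b1 b2 = (\<lambda>z. vector [p * z$1 + q * z$2 + b1, r * z$1 + t * z$2 + b2])"

lemma vec2_eq_iff: "(x::real^2) = y \<longleftrightarrow> x$1 = y$1 \<and> x$2 = y$2"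
  by (auto simp: vec_eq_iff forall_2)

lemma affmap_nth [simp]:
  "affmap p q r t b1 b2 z $ 1 = p * z$1 + q * z$2 + b1"
  "affmap p q r t b1 b2 z $ 2 = r * z$1 + t * z$2 + b2"
  by (simp_all add: affmap_def)

lemma affmap_comp:
  "affmap p q r t b1 b2 \<circ> affmap p' q' r' t' b1' b2' =
   affmap (p*p' + q*r') (p*q' + q*t') (r*p' + t*r') (r*q' + t*t')
       (p*b1' + q*b2' + b1) (r*b1' + t*b2' + b2)"
  by (rule ext) (simp add: vec2_eq_iff algebra_simps)

lemma affmap_eq_iff:
  "affmap p q r t b1 b2 = affmap p' q' r' t' b1' b2' \<longleftrightarrow>
   p = p' \<and> q = q' \<and> r = r' \<and> t = t' \<and> b1 = b1' \<and> b2 = b2'"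
proof
  assume "affmap p q r t b1 b2 = affmap p' q' r' t' b1' b2'"
  then have e: "\<And>z. affmap p q r t b1 b2 z = affmap p' q' r' t' b1' b2' z" by simp
  from e[of "vector [0,0]"] have b: "b1 = b1'" "b2 = b2'" by (simp_all add: vec2_eq_iff)
  from e[of "vector [1,0]"] e[of "vector [0,1]"] b
  show "p = p' \<and> q = q' \<and> r = r' \<and> t = t' \<and> b1 = b1' \<and> b2 = b2'" by (simp add: vec2_eq_iff)
qed simp

lemma affmap_id: "affmap 1 0 0 1 0 0 = id"
  by (rule ext) (simp add: vec2_eq_iff)

definition affmap_inv :: "real \<Rightarrow> real \<Rightarrow> real \<Rightarrow> real \<Rightarrow> real \<Rightarrow> real \<Rightarrow> emap" where
  "affmap_inv p q r t b1 b2 = (let d = p*t - q*r in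
     affmap (t/d) (-q/d) (-r/d) (p/d) (-(t*b1 - q*b2)/d) (-(p*b2 - r*b1)/d))"

lemma affmap_inv_comp:
  assumes "p*t - q*r \<noteq> 0"
  shows "affmap_inv p q r t b1 b2 \<circ> affmap p q r t b1 b2 = id"
    and "affmap p q r t b1 b2 \<circ> affmap_inv p q r t b1 b2 = id"
proof -
  define d where "d = p*t - q*r"
  have d0: "d \<noteq> 0" using assms by (simp add: d_def)
  have e: "affmap_inv p q r t b1 b2 =
      affmap (t/d) (-q/d) (-r/d) (p/d) (-(t*b1 - q*b2)/d) (-(p*b2 - r*b1)/d)"
    by (simp add: affmap_inv_def d_def Let_def)
  show "affmap_inv p q r t b1 b2 \<circ> affmap p q r t b1 b2 = id"
    unfolding e affmap_comp affmap_id[symmetric] affmap_eq_iff using d0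
    by (simp add: d_def divide_simps; simp add: algebra_simps)
  show "affmap p q r t b1 b2 \<circ> affmap_inv p q r t b1 b2 = id"
    unfolding e affmap_comp affmap_id[symmetric] affmap_eq_iff using d0
    by (simp add: d_def divide_simps; simp add: algebra_simps)
qed

lemma inv_affmap:
  "p*t - q*r \<noteq> 0 \<Longrightarrow> inv_into UNIV (affmap p q r t b1 b2) = affmap_inv p q r t b1 b2"
  using affmap_inv_comp by (simp add: inv_unique_comp)

lemma bij_affmap: "p*t - q*r \<noteq> 0 \<Longrightarrow> bij (affmap p q r t b1 b2)"
  using affmap_inv_comp by (metis o_bij)

lemma affine_auto_affmap:
  "affine_auto f \<longleftrightarrow> (\<exists>p q r t b1 b2. p*t - q*r \<noteq> 0 \<and> f = affmap p q r t b1 b2)"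
proof
  assume "affine_auto f"
  then obtain a and A :: "real^2^2" where A: "invertible A" "f = (\<lambda>x. a + A *v x)"
    unfolding affine_auto_def by blast
  have "A$1$1 * A$2$2 - A$1$2 * A$2$1 \<noteq> 0" using A(1) by (simp add: invertible_det_nz det_2)
  moreover have "f = affmap (A$1$1) (A$1$2) (A$2$1) (A$2$2) (a$1) (a$2)"
    by (rule ext) (simp add: A(2) vec2_eq_iff matrix_vector_mult_def sum_2 algebra_simps)
  ultimately show "\<exists>p q r t b1 b2. p*t - q*r \<noteq> 0 \<and> f = affmap p q r t b1 b2" by blast
next
  assume "\<exists>p q r t b1 b2. p*t - q*r \<noteq> 0 \<and> f = affmap p q r t b1 b2"
  then obtain p q r t b1 b2 where h: "p*t - q*r \<noteq> 0" "f = affmap p q r t b1 b2" by blast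
  define A :: "real^2^2" where "A = vector [vector [p, q], vector [r, t]]"
  have "invertible A" using h(1) by (simp add: invertible_det_nz det_2 A_def)
  moreover have "f = (\<lambda>x. vector [b1, b2] + A *v x)"
    by (rule ext) (simp add: h(2) A_def vec2_eq_iff matrix_vector_mult_def sum_2 algebra_simps)
  ultimately show "affine_auto f" unfolding affine_auto_def by blast
qed

lemma affine_auto_id: "affine_auto id"
  unfolding affine_auto_affmap affmap_id[symmetric]
  by (intro exI[of _ 1] exI[of _ 0] exI[of _ 0] exI[of _ 1] exI[of _ 0] exI[of _ 0]) simp

lemma affine_auto_bij: "affine_auto f \<Longrightarrow> bij f"
  unfolding affine_auto_affmap using bij_affmap by blast

lemma affine_auto_comp:
  assumes "affine_auto f" "affine_auto g"
  shows "affine_auto (f \<circ> g)"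
proof -
  obtain p q r t b1 b2 where f: "p*t - q*r \<noteq> 0" "f = affmap p q r t b1 b2"
    using assms(1) unfolding affine_auto_affmap by blast
  obtain p' q' r' t' b1' b2' where g: "p'*t' - q'*r' \<noteq> 0" "g = affmap p' q' r' t' b1' b2'"
    using assms(2) unfolding affine_auto_affmap by blast
  have "(p*p' + q*r') * (r*q' + t*t') - (p*q' + q*t') * (r*p' + t*r') = (p*t - q*r) * (p'*t' - q'*r')"
    by argo
  then have "(p*p' + q*r') * (r*q' + t*t') - (p*q' + q*t') * (r*p' + t*r') \<noteq> 0"
    using f(1) g(1) by simp
  moreover have "f \<circ> g = affmap (p*p' + q*r') (p*q' + q*t') (r*p' + t*r') (r*q' + t*t')
       (p*b1' + q*b2' + b1) (r*b1' + t*b2' + b2)"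
    unfolding f(2) g(2) affmap_comp ..
  ultimately show ?thesis unfolding affine_auto_affmap by blast
qed

lemma affine_auto_inv: "affine_auto f \<Longrightarrow> affine_auto (inv_into UNIV f)"
proof -
  assume "affine_auto f"
  then obtain p q r t b1 b2 where f: "p*t - q*r \<noteq> 0" "f = affmap p q r t b1 b2"
    unfolding affine_auto_affmap by blast
  define d where "d = p*t - q*r"
  have nz: "D \<noteq> 0 \<Longrightarrow> D = p*t - q*r \<Longrightarrow> (t/D) * (p/D) - (-q/D) * (-r/D) \<noteq> 0" for D
    by (simp add: field_simps)
  have "(t/d) * (p/d) - (-q/d) * (-r/d) \<noteq> 0" using nz f(1) d_def by simp
  moreover have "inv_into UNIV f = affmap (t/d) (-q/d) (-r/d) (p/d) (-(t*b1 - q*b2)/d) (-(p*b2 - r*b1)/d)"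
    unfolding f(2) inv_affmap[OF f(1)] affmap_inv_def d_def by (simp add: Let_def)
  ultimately show ?thesis unfolding affine_auto_affmap by blast
qed

lemma continuous_on_affmap_nth:
  "continuous_on UNIV (\<lambda>x. affmap p q r t b1 b2 x $ 1)"
  "continuous_on UNIV (\<lambda>x. affmap p q r t b1 b2 x $ 2)"
proof -
  have c: "continuous_on UNIV (\<lambda>x::pt. x $ j)" for j
    by (simp add: linear_continuous_on bounded_linear_vec_nth)
  show "continuous_on UNIV (\<lambda>x. affmap p q r t b1 b2 x $ 1)"
    "continuous_on UNIV (\<lambda>x. affmap p q r t b1 b2 x $ 2)"
    by (simp only: affmap_nth; intro continuous_intros c)+
qed


section \<open>Conjugation by a bijection\<close>

lemma conj_eq_iff: "bij \<psi> \<Longrightarrow> conj \<psi> g = h \<longleftrightarrow> \<psi> \<circ> g = h \<circ> \<psi>"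
  unfolding conj_def
  by (metis (no_types, lifting) bij_is_inj bij_is_surj comp_id fun.map_comp inj_iff surj_iff)

lemma conj_intertwines: "bij \<psi> \<Longrightarrow> \<psi> \<circ> g = conj \<psi> g \<circ> \<psi>"
  using conj_eq_iff by blast

lemma conj_apply: "bij \<psi> \<Longrightarrow> conj \<psi> g (\<psi> x) = \<psi> (g x)"
  using conj_intertwines by (metis comp_apply)

lemma conj_id [simp]: "conj id g = g"
  unfolding conj_def by simp

lemma conj_id_right: "bij \<psi> \<Longrightarrow> conj \<psi> id = id"
  by (simp add: conj_eq_iff)

lemma conj_comp: "bij \<psi> \<Longrightarrow> conj \<psi> (g \<circ> h) = conj \<psi> g \<circ> conj \<psi> h"
  by (simp add: conj_eq_iff) (metis conj_intertwines comp_assoc)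

lemma conj_conj:
  assumes "bij \<alpha>" "bij \<beta>"
  shows "conj \<alpha> (conj \<beta> g) = conj (\<alpha> \<circ> \<beta>) g"
proof -
  have "\<alpha> \<circ> \<beta> \<circ> g = \<alpha> \<circ> (\<beta> \<circ> g)" by (simp add: o_assoc)
  also have "\<beta> \<circ> g = conj \<beta> g \<circ> \<beta>" using conj_intertwines[OF assms(2)] .
  also have "\<alpha> \<circ> (conj \<beta> g \<circ> \<beta>) = (\<alpha> \<circ> conj \<beta> g) \<circ> \<beta>" by (simp add: o_assoc)
  also have "\<alpha> \<circ> conj \<beta> g = conj \<alpha> (conj \<beta> g) \<circ> \<alpha>" using conj_intertwines[OF assms(1)] .
  finally have "\<alpha> \<circ> \<beta> \<circ> g = conj \<alpha> (conj \<beta> g) \<circ> \<alpha> \<circ> \<beta>" .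
  then have "\<alpha> \<circ> \<beta> \<circ> g = conj \<alpha> (conj \<beta> g) \<circ> (\<alpha> \<circ> \<beta>)" by (simp only: o_assoc)
  then show ?thesis using conj_eq_iff[OF bij_comp[OF assms(2,1)]] by metis
qed

lemma conj_image_conj: "bij \<alpha> \<Longrightarrow> bij \<beta> \<Longrightarrow> conj (\<alpha> \<circ> \<beta>) ` Y = conj \<alpha> ` conj \<beta> ` Y"
  by (simp add: conj_conj image_image)

lemma conj_inv_conj: "bij \<psi> \<Longrightarrow> conj (inv_into UNIV \<psi>) (conj \<psi> g) = g"
  by (simp add: conj_conj bij_imp_bij_inv bij_is_inj inj_iff[THEN iffD1])

lemma conj_conj_inv: "bij \<psi> \<Longrightarrow> conj \<psi> (conj (inv_into UNIV \<psi>) g) = g"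
  by (simp add: conj_conj bij_imp_bij_inv bij_is_surj surj_iff[THEN iffD1])

lemma conj_inj: "bij \<psi> \<Longrightarrow> conj \<psi> g = conj \<psi> h \<Longrightarrow> g = h"
  by (metis conj_inv_conj)


section \<open>Orbits and affine normalizers\<close>

lemma orb_eq_iff:
  assumes id: "id \<in> G" and comp: "\<And>g h. g \<in> G \<Longrightarrow> h \<in> G \<Longrightarrow> g \<circ> h \<in> G"
    and inverse: "\<And>g. g \<in> G \<Longrightarrow> \<exists>g'\<in>G. g' \<circ> g = id"
  shows "orb G z = orb G z' \<longleftrightarrow> (\<exists>g\<in>G. z' = g z)"
proof
  assume "orb G z = orb G z'"
  moreover have "z' \<in> orb G z'" unfolding orb_def using id by (metis id_apply image_eqI)
  ultimately show "\<exists>g\<in>G. z' = g z" unfolding orb_def by auto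
next
  assume "\<exists>g\<in>G. z' = g z"
  then obtain g g' where g: "g \<in> G" "z' = g z" "g' \<in> G" "g' \<circ> g = id" using inverse by blast
  have "orb G z' \<subseteq> orb G z" unfolding orb_def g(2) using comp[OF _ g(1)]
    by (auto simp: image_iff) (metis comp_apply)
  moreover have "orb G z \<subseteq> orb G z'" unfolding orb_def g(2)
  proof
    fix x assume "x \<in> (\<lambda>h. h z) ` G"
    then obtain h where h: "h \<in> G" "x = h z" by blast
    have "x = (h \<circ> g') (g z)" using g(4) h(2) by (metis comp_apply id_apply)
    then show "x \<in> (\<lambda>h. h (g z)) ` G" using comp[OF h(1) g(3)] by blast
  qed
  ultimately show "orb G z = orb G z'" by blast
qed

lemma id_NA: "id \<in> NA G"
  unfolding NA_def using affine_auto_id by simp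

lemma NA_comp:
  assumes "\<alpha> \<in> NA G" "\<beta> \<in> NA G"
  shows "\<alpha> \<circ> \<beta> \<in> NA G"
proof -
  have a: "affine_auto \<alpha>" "affine_auto \<beta>" using assms unfolding NA_def by blast+
  have "conj (\<alpha> \<circ> \<beta>) ` G = conj \<alpha> ` conj \<beta> ` G"
    using conj_image_conj[OF affine_auto_bij[OF a(1)] affine_auto_bij[OF a(2)]] .
  also have "\<dots> = G" using assms unfolding NA_def by simp
  finally show ?thesis unfolding NA_def using affine_auto_comp[OF a] by blast
qed

lemma NA_inv:
  assumes "\<alpha> \<in> NA G"
  shows "inv_into UNIV \<alpha> \<in> NA G"
proof -
  have a: "affine_auto \<alpha>" using assms unfolding NA_def by blast
  have "conj (inv_into UNIV \<alpha>) ` G = conj (inv_into UNIV \<alpha>) ` conj \<alpha> ` G"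
    using assms unfolding NA_def by simp
  also have "\<dots> = G" using conj_inv_conj[OF affine_auto_bij[OF a]] by (simp add: image_image)
  finally show ?thesis unfolding NA_def using affine_auto_inv[OF a] by blast
qed

lemma conj_NA_conj_image:
  assumes \<phi>: "affine_auto \<phi>" and \<psi>: "\<psi> \<in> NA G"
  shows "conj \<phi> \<psi> \<in> NA (conj \<phi> ` G)"
proof -
  have a\<psi>: "affine_auto \<psi>" using \<psi> unfolding NA_def by blast
  have b: "bij \<phi>" "bij \<psi>" using affine_auto_bij \<phi> a\<psi> by blast+
  have a: "affine_auto (conj \<phi> \<psi>)"
    unfolding conj_def using affine_auto_comp[OF affine_auto_comp[OF \<phi> a\<psi>] affine_auto_inv[OF \<phi>]] .
  have "conj \<phi> \<psi> \<circ> \<phi> = \<phi> \<circ> \<psi>" using conj_intertwines[OF b(1), of \<psi>] by simp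
  then have "conj (conj \<phi> \<psi>) (conj \<phi> g) = conj \<phi> (conj \<psi> g)" for g
    using conj_conj[OF affine_auto_bij[OF a] b(1)] conj_conj[OF b] by simp
  then have "conj (conj \<phi> \<psi>) ` conj \<phi> ` G = conj \<phi> ` conj \<psi> ` G" by (simp add: image_image)
  also have "\<dots> = conj \<phi> ` G" using \<psi> unfolding NA_def by simp
  finally show ?thesis unfolding NA_def using a by blast
qed

lemma NA_conj_image:
  assumes \<phi>: "affine_auto \<phi>"
  shows "NA (conj \<phi> ` G) = conj \<phi> ` NA G"
proof
  show "conj \<phi> ` NA G \<subseteq> NA (conj \<phi> ` G)" using conj_NA_conj_image[OF \<phi>] by blast
  have b: "bij \<phi>" using affine_auto_bij[OF \<phi>] .
  show "NA (conj \<phi> ` G) \<subseteq> conj \<phi> ` NA G"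
  proof
    fix \<alpha> assume "\<alpha> \<in> NA (conj \<phi> ` G)"
    then have "conj (inv_into UNIV \<phi>) \<alpha> \<in> NA (conj (inv_into UNIV \<phi>) ` conj \<phi> ` G)"
      by (rule conj_NA_conj_image[OF affine_auto_inv[OF \<phi>]])
    moreover have "conj (inv_into UNIV \<phi>) ` conj \<phi> ` G = G"
      using conj_inv_conj[OF b] by (simp add: image_image)
    ultimately show "\<alpha> \<in> conj \<phi> ` NA G" using conj_conj_inv[OF b, of \<alpha>] by (metis image_eqI)
  qed
qed

lemma orb_NA:
  assumes "\<alpha> \<in> NA G"
  shows "orb G (\<alpha> x) = \<alpha> ` orb G x"
proof -
  have b: "bij \<alpha>" using assms affine_auto_bij unfolding NA_def by blast
  have "orb G (\<alpha> x) = (\<lambda>g. g (\<alpha> x)) ` conj \<alpha> ` G" using assms unfolding NA_def orb_def by simp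
  also have "\<dots> = \<alpha> ` orb G x" unfolding orb_def image_image conj_apply[OF b] ..
  finally show ?thesis .
qed

lemma orb_conj_image: "bij \<phi> \<Longrightarrow> orb (conj \<phi> ` G) (\<phi> z) = \<phi> ` orb G z"
  unfolding orb_def by (simp add: image_image conj_apply)


section \<open>The standard group pmm\<close>

definition pmm_elt :: "int \<Rightarrow> int \<Rightarrow> int \<Rightarrow> int \<Rightarrow> emap" where
  "pmm_elt e1 e2 m n = affmap (of_int e1) 0 0 (of_int e2) (2 * of_int m) (2 * of_int n)"

lemma pmm_elt_nth [simp]:
  "pmm_elt e1 e2 m n z $ 1 = of_int e1 * z$1 + 2 * of_int m"
  "pmm_elt e1 e2 m n z $ 2 = of_int e2 * z$2 + 2 * of_int n"
  by (simp_all add: pmm_elt_def)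

lemma pmm_std_eq: "pmm_std = {pmm_elt e1 e2 m n | e1 e2 m n. e1 \<in> {1, -1} \<and> e2 \<in> {1, -1}}"
proof (intro equalityI subsetI)
  fix g assume "g \<in> pmm_std"
  then obtain e1 e2 :: real and m n :: int where h: "e1 \<in> {1, -1}" "e2 \<in> {1, -1}"
    "g = (\<lambda>x. vector [e1 * x$1 + 2 * of_int m, e2 * x$2 + 2 * of_int n])"
    unfolding pmm_std_def by blast
  define i1 :: int where "i1 = (if e1 = 1 then 1 else -1)"
  define i2 :: int where "i2 = (if e2 = 1 then 1 else -1)"
  have i: "i1 \<in> {1,-1}" "e1 = of_int i1" "i2 \<in> {1,-1}" "e2 = of_int i2"
    using h(1,2) unfolding i1_def i2_def by auto
  have "g = pmm_elt i1 i2 m n" unfolding h(3) by (rule ext) (simp add: vec2_eq_iff i)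
  then show "g \<in> {pmm_elt e1 e2 m n | e1 e2 m n. e1 \<in> {1, -1} \<and> e2 \<in> {1, -1}}" using i by blast
next
  fix g assume "g \<in> {pmm_elt e1 e2 m n | e1 e2 m n. e1 \<in> {1, -1} \<and> e2 \<in> {1, -1}}"
  then obtain e1 e2 m n where h: "e1 \<in> {1,-1}" "e2 \<in> {1,-1}" "g = pmm_elt e1 e2 m n" by blast
  have "g = (\<lambda>x. vector [of_int e1 * x$1 + 2 * of_int m, of_int e2 * x$2 + 2 * of_int n])"
    unfolding h(3) by (rule ext) (simp add: vec2_eq_iff)
  moreover have "(of_int e1::real) \<in> {1,-1}" "(of_int e2::real) \<in> {1,-1}" using h by auto
  ultimately show "g \<in> pmm_std" unfolding pmm_std_def by blast
qed

lemma pmm_elt_comp: "pmm_elt e1 e2 m n \<circ> pmm_elt f1 f2 k l = pmm_elt (e1*f1) (e2*f2) (e1*k + m) (e2*l + n)"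
  unfolding pmm_elt_def affmap_comp by (simp add: affmap_eq_iff algebra_simps)

lemma pmm_elt_eq_iff: "pmm_elt e1 e2 m n = pmm_elt f1 f2 k l \<longleftrightarrow> e1 = f1 \<and> e2 = f2 \<and> m = k \<and> n = l"
  unfolding pmm_elt_def affmap_eq_iff by simp

lemma pmm_elt_id: "pmm_elt 1 1 0 0 = id"
  unfolding pmm_elt_def by (simp add: affmap_id)

lemma pmm_elt_inverse:
  assumes "e1 \<in> {1,-1}" "e2 \<in> {1,-1}"
  shows "pmm_elt e1 e2 m n \<circ> pmm_elt e1 e2 (-e1*m) (-e2*n) = id"
    and "pmm_elt e1 e2 (-e1*m) (-e2*n) \<circ> pmm_elt e1 e2 m n = id"
  using assms unfolding pmm_elt_comp pmm_elt_id[symmetric] pmm_elt_eq_iff by auto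

lemma pmm_eltI: "e1 \<in> {1,-1} \<Longrightarrow> e2 \<in> {1,-1} \<Longrightarrow> pmm_elt e1 e2 m n \<in> pmm_std"
  unfolding pmm_std_eq by blast

lemma pmm_stdE:
  assumes "g \<in> pmm_std"
  obtains e1 e2 m n where "e1 \<in> {1,-1}" "e2 \<in> {1,-1}" "g = pmm_elt e1 e2 m n"
  using assms unfolding pmm_std_eq by blast

lemma pmm_std_id: "id \<in> pmm_std"
  using pmm_eltI[of 1 1 0 0] pmm_elt_id by simp

lemma pmm_std_comp:
  assumes "g \<in> pmm_std" "h \<in> pmm_std"
  shows "g \<circ> h \<in> pmm_std"
proof -
  obtain e1 e2 m n where g: "e1 \<in> {1,-1}" "e2 \<in> {1,-1}" "g = pmm_elt e1 e2 m n"
    using assms(1) by (rule pmm_stdE)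
  obtain f1 f2 k l where h: "f1 \<in> {1,-1}" "f2 \<in> {1,-1}" "h = pmm_elt f1 f2 k l"
    using assms(2) by (rule pmm_stdE)
  have "e1 * f1 \<in> {1,-1}" "e2 * f2 \<in> {1,-1}" using g h by auto
  then show ?thesis unfolding g(3) h(3) pmm_elt_comp by (rule pmm_eltI)
qed

lemma pmm_std_inverse: "g \<in> pmm_std \<Longrightarrow> \<exists>g'\<in>pmm_std. g \<circ> g' = id \<and> g' \<circ> g = id"
proof -
  assume "g \<in> pmm_std"
  then obtain e1 e2 m n where h: "e1 \<in> {1,-1}" "e2 \<in> {1,-1}" "g = pmm_elt e1 e2 m n"
    by (rule pmm_stdE)
  have "pmm_elt e1 e2 (-e1*m) (-e2*n) \<in> pmm_std" using h by (simp add: pmm_eltI)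
  then show ?thesis using pmm_elt_inverse[OF h(1,2)] h(3) by blast
qed

lemma orb_pmm_std_eq_iff: "orb pmm_std z = orb pmm_std z' \<longleftrightarrow> (\<exists>g\<in>pmm_std. z' = g z)"
  using orb_eq_iff[OF pmm_std_id pmm_std_comp] pmm_std_inverse by blast


section \<open>The affine normalizer of pmm\<close>

definition signed_perm :: "int \<Rightarrow> int \<Rightarrow> int \<Rightarrow> int \<Rightarrow> bool" where
  "signed_perm p q r t \<longleftrightarrow>
     (q = 0 \<and> r = 0 \<and> p \<in> {1,-1} \<and> t \<in> {1,-1}) \<or> (p = 0 \<and> t = 0 \<and> q \<in> {1,-1} \<and> r \<in> {1,-1})"

definition lattice_isometry :: "emap \<Rightarrow> bool" where
  "lattice_isometry \<psi> \<longleftrightarrow> (\<exists>p q r t b1 b2 :: int. signed_perm p q r t \<and>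
     \<psi> = affmap (of_int p) (of_int q) (of_int r) (of_int t) (of_int b1) (of_int b2))"

lemma signed_perm_mult:
  "signed_perm a11 a12 a21 a22 \<Longrightarrow> signed_perm b11 b12 b21 b22 \<Longrightarrow>
   signed_perm (a11*b11 + a12*b21) (a11*b12 + a12*b22) (a21*b11 + a22*b21) (a21*b12 + a22*b22)"
  unfolding signed_perm_def by (elim disjE conjE) auto

lemma affmap_pmm_elt_intertwine_iff:
  "affmap p q r t b1 b2 \<circ> pmm_elt e1 e2 m n = pmm_elt f1 f2 k l \<circ> affmap p q r t b1 b2 \<longleftrightarrow>
   p * of_int e1 = of_int f1 * p \<and> q * of_int e2 = of_int f1 * q \<and>
   r * of_int e1 = of_int f2 * r \<and> t * of_int e2 = of_int f2 * t \<and>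
   2 * p * of_int m + 2 * q * of_int n + b1 = of_int f1 * b1 + 2 * of_int k \<and>
   2 * r * of_int m + 2 * t * of_int n + b2 = of_int f2 * b2 + 2 * of_int l"
  unfolding pmm_elt_def affmap_comp affmap_eq_iff by (simp add: algebra_simps)

lemma lattice_isometry_affine: "lattice_isometry \<psi> \<Longrightarrow> affine_auto \<psi>"
  unfolding lattice_isometry_def signed_perm_def affine_auto_affmap by force

lemma lattice_isometry_bij: "lattice_isometry \<psi> \<Longrightarrow> bij \<psi>"
  using lattice_isometry_affine affine_auto_bij by blast

lemma lattice_isometry_id: "lattice_isometry id"
  unfolding lattice_isometry_def signed_perm_def affmap_id[symmetric]
  by (intro exI[of _ 1] exI[of _ 0] exI[of _ 0] exI[of _ 1] exI[of _ 0] exI[of _ 0]) simp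

lemma pmm_std_lattice_isometry:
  assumes "g \<in> pmm_std"
  shows "lattice_isometry g"
proof -
  obtain e1 e2 m n where e: "e1 \<in> {1,-1}" "e2 \<in> {1,-1}" "g = pmm_elt e1 e2 m n"
    using assms by (rule pmm_stdE)
  then have "signed_perm e1 0 0 e2" unfolding signed_perm_def by simp
  moreover have "g = affmap (of_int e1) (of_int 0) (of_int 0) (of_int e2) (of_int (2*m)) (of_int (2*n))"
    unfolding e(3) pmm_elt_def by simp
  ultimately show ?thesis unfolding lattice_isometry_def by blast
qed

lemma lattice_isometry_comp:
  assumes "lattice_isometry f" "lattice_isometry g"
  shows "lattice_isometry (f \<circ> g)"
proof -
  obtain p q r t b1 b2 :: int where f: "signed_perm p q r t"
    "f = affmap (of_int p) (of_int q) (of_int r) (of_int t) (of_int b1) (of_int b2)"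
    using assms(1) unfolding lattice_isometry_def by blast
  obtain p' q' r' t' b1' b2' :: int where g: "signed_perm p' q' r' t'"
    "g = affmap (of_int p') (of_int q') (of_int r') (of_int t') (of_int b1') (of_int b2')"
    using assms(2) unfolding lattice_isometry_def by blast
  have "f \<circ> g = affmap (of_int (p*p' + q*r')) (of_int (p*q' + q*t')) (of_int (r*p' + t*r'))
      (of_int (r*q' + t*t')) (of_int (p*b1' + q*b2' + b1)) (of_int (r*b1' + t*b2' + b2))"
    unfolding f(2) g(2) affmap_comp by simp
  then show ?thesis unfolding lattice_isometry_def using signed_perm_mult[OF f(1) g(1)] by blast
qed

lemma lattice_isometry_inverse:
  assumes "lattice_isometry \<psi>"
  shows "\<exists>\<psi>'. lattice_isometry \<psi>' \<and> \<psi>' \<circ> \<psi> = id \<and> \<psi> \<circ> \<psi>' = id"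
proof -
  obtain p q r t b1 b2 :: int where h: "signed_perm p q r t"
    "\<psi> = affmap (of_int p) (of_int q) (of_int r) (of_int t) (of_int b1) (of_int b2)"
    using assms unfolding lattice_isometry_def by blast
  define \<psi>' where "\<psi>' = affmap (of_int p) (of_int r) (of_int q) (of_int t)
      (of_int (-p*b1 - r*b2)) (of_int (-q*b1 - t*b2))"
  have "signed_perm p r q t" using h(1) unfolding signed_perm_def by blast
  then have "lattice_isometry \<psi>'" unfolding lattice_isometry_def \<psi>'_def by blast
  moreover have "\<psi>' \<circ> \<psi> = id \<and> \<psi> \<circ> \<psi>' = id"
    using h(1) unfolding \<psi>'_def h(2) affmap_comp affmap_id[symmetric] affmap_eq_iff signed_perm_def
    by (elim disjE conjE) (auto simp: algebra_simps)
  ultimately show ?thesis by blast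
qed

lemma lattice_isometry_conj_pmm_std:
  assumes "lattice_isometry \<psi>" "g \<in> pmm_std"
  shows "conj \<psi> g \<in> pmm_std"
proof -
  obtain p q r t b1 b2 :: int where h: "signed_perm p q r t"
    "\<psi> = affmap (of_int p) (of_int q) (of_int r) (of_int t) (of_int b1) (of_int b2)"
    using assms(1) unfolding lattice_isometry_def by blast
  obtain e1 e2 m n where g: "e1 \<in> {1,-1}" "e2 \<in> {1,-1}" "g = pmm_elt e1 e2 m n"
    using assms(2) by (rule pmm_stdE)
  have b: "bij \<psi>" using lattice_isometry_bij[OF assms(1)] .
  from h(1) consider "q = 0 \<and> r = 0 \<and> p \<in> {1,-1} \<and> t \<in> {1,-1}"
    | "p = 0 \<and> t = 0 \<and> q \<in> {1,-1} \<and> r \<in> {1,-1}" unfolding signed_perm_def by blast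
  then show ?thesis
  proof cases
    case 1
    define h where "h = pmm_elt e1 e2 (p*m + (if e1 = 1 then 0 else b1)) (t*n + (if e2 = 1 then 0 else b2))"
    have "\<psi> \<circ> g = h \<circ> \<psi>" unfolding h(2) g(3) h_def affmap_pmm_elt_intertwine_iff using 1 g(1,2) by auto
    then have "conj \<psi> g = h" using conj_eq_iff[OF b] by blast
    then show ?thesis using g(1,2) h_def pmm_eltI by simp
  next
    case 2
    define h where "h = pmm_elt e2 e1 (q*n + (if e2 = 1 then 0 else b1)) (r*m + (if e1 = 1 then 0 else b2))"
    have "\<psi> \<circ> g = h \<circ> \<psi>" unfolding h(2) g(3) h_def affmap_pmm_elt_intertwine_iff using 2 g(1,2) by auto
    then have "conj \<psi> g = h" using conj_eq_iff[OF b] by blast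
    then show ?thesis using g(1,2) h_def pmm_eltI by simp
  qed
qed

lemma lattice_isometry_NA_pmm_std:
  assumes "lattice_isometry \<psi>"
  shows "\<psi> \<in> NA pmm_std"
proof -
  obtain \<psi>' where i: "lattice_isometry \<psi>'" "\<psi> \<circ> \<psi>' = id"
    using lattice_isometry_inverse[OF assms] by blast
  have b: "bij \<psi>" "bij \<psi>'" using lattice_isometry_bij assms i(1) by blast+
  have "conj \<psi> (conj \<psi>' h) = h" for h using conj_conj[OF b] i(2) by simp
  then have "pmm_std \<subseteq> conj \<psi> ` pmm_std"
    using lattice_isometry_conj_pmm_std[OF i(1)] by (metis image_eqI subsetI)
  then show ?thesis
    unfolding NA_def using lattice_isometry_conj_pmm_std[OF assms] lattice_isometry_affine[OF assms]
    by blast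
qed

lemma NA_pmm_std_intertwines:
  assumes "\<psi> \<in> NA pmm_std" "e1 \<in> {1,-1}" "e2 \<in> {1,-1}"
  shows "\<exists>f1 f2 k l. f1 \<in> {1,-1} \<and> f2 \<in> {1,-1} \<and> \<psi> \<circ> pmm_elt e1 e2 m n = pmm_elt f1 f2 k l \<circ> \<psi>"
    and "\<exists>f1 f2 k l. f1 \<in> {1,-1} \<and> f2 \<in> {1,-1} \<and> \<psi> \<circ> pmm_elt f1 f2 k l = pmm_elt e1 e2 m n \<circ> \<psi>"
proof -
  have b: "bij \<psi>" using assms(1) affine_auto_bij unfolding NA_def by blast
  have "conj \<psi> (pmm_elt e1 e2 m n) \<in> pmm_std" using assms pmm_eltI unfolding NA_def by blast
  then obtain f1 f2 k l where "f1 \<in> {1,-1}" "f2 \<in> {1,-1}" "conj \<psi> (pmm_elt e1 e2 m n) = pmm_elt f1 f2 k l"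
    by (rule pmm_stdE)
  then show "\<exists>f1 f2 k l. f1 \<in> {1,-1} \<and> f2 \<in> {1,-1} \<and> \<psi> \<circ> pmm_elt e1 e2 m n = pmm_elt f1 f2 k l \<circ> \<psi>"
    using conj_eq_iff[OF b] by blast
  have "pmm_elt e1 e2 m n \<in> conj \<psi> ` pmm_std" using assms pmm_eltI unfolding NA_def by blast
  then obtain f1 f2 k l where "f1 \<in> {1,-1}" "f2 \<in> {1,-1}" "conj \<psi> (pmm_elt f1 f2 k l) = pmm_elt e1 e2 m n"
    by (metis imageE pmm_stdE)
  then show "\<exists>f1 f2 k l. f1 \<in> {1,-1} \<and> f2 \<in> {1,-1} \<and> \<psi> \<circ> pmm_elt f1 f2 k l = pmm_elt e1 e2 m n \<circ> \<psi>"
    using conj_eq_iff[OF b] by blast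
qed

text \<open>Conjugating the generating translations by (2,0) and (0,2) gives translations again, so the
  columns of the linear part are integral; that these translations are also hit gives an integral
  inverse.\<close>

lemma NA_pmm_std_linear_part:
  assumes \<psi>: "affmap p q r t b1 b2 \<in> NA pmm_std" and det: "p*t - q*r \<noteq> 0"
  obtains k l k' l' m n m' n' :: int
  where "p = of_int k" "r = of_int l" "q = of_int k'" "t = of_int l'"
    and "k * m + k' * n = 1" "l * m + l' * n = 0" "k * m' + k' * n' = 0" "l * m' + l' * n' = 1"
proof -
  note E = affmap_pmm_elt_intertwine_iff[of p q r t b1 b2]
  obtain f1 f2 k l where T1: "f1 \<in> {1,-1}" "f2 \<in> {1,-1}"
    "p = of_int f1 * p" "q = of_int f1 * q" "r = of_int f2 * r" "t = of_int f2 * t"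
    "2 * p + b1 = of_int f1 * b1 + 2 * of_int k" "2 * r + b2 = of_int f2 * b2 + 2 * of_int l"
    using NA_pmm_std_intertwines(1)[OF \<psi>, of 1 1 1 0] unfolding E by auto
  have "f1 = 1" "f2 = 1" using T1(1-6) det by auto
  then have pr: "p = of_int k" "r = of_int l" using T1(7,8) by simp_all
  obtain f1' f2' k' l' where T2: "f1' \<in> {1,-1}" "f2' \<in> {1,-1}"
    "p = of_int f1' * p" "q = of_int f1' * q" "r = of_int f2' * r" "t = of_int f2' * t"
    "2 * q + b1 = of_int f1' * b1 + 2 * of_int k'" "2 * t + b2 = of_int f2' * b2 + 2 * of_int l'"
    using NA_pmm_std_intertwines(1)[OF \<psi>, of 1 1 0 1] unfolding E by auto
  have "f1' = 1" "f2' = 1" using T2(1-6) det by auto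
  then have qt: "q = of_int k'" "t = of_int l'" using T2(7,8) by simp_all
  obtain m n where "2 * p * of_int m + 2 * q * of_int n + b1 = b1 + 2"
      "2 * r * of_int m + 2 * t * of_int n + b2 = b2"
    using NA_pmm_std_intertwines(2)[OF \<psi>, of 1 1 1 0] unfolding E by auto
  then have "of_int (k * m + k' * n) = (1::real)" "of_int (l * m + l' * n) = (0::real)"
    unfolding pr qt by simp_all
  then have S1: "k * m + k' * n = 1" "l * m + l' * n = 0"
    by (simp_all only: of_int_eq_1_iff of_int_eq_0_iff)
  obtain m' n' where "2 * p * of_int m' + 2 * q * of_int n' + b1 = b1"
      "2 * r * of_int m' + 2 * t * of_int n' + b2 = b2 + 2"
    using NA_pmm_std_intertwines(2)[OF \<psi>, of 1 1 0 1] unfolding E by auto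
  then have "of_int (k * m' + k' * n') = (0::real)" "of_int (l * m' + l' * n') = (1::real)"
    unfolding pr qt by simp_all
  then have S2: "k * m' + k' * n' = 0" "l * m' + l' * n' = 1"
    by (simp_all only: of_int_eq_1_iff of_int_eq_0_iff)
  show thesis using that pr qt S1 S2 .
qed

lemma NA_pmm_std_lattice_isometry:
  assumes "\<psi> \<in> NA pmm_std"
  shows "lattice_isometry \<psi>"
proof -
  obtain p q r t b1 b2 where det: "p*t - q*r \<noteq> 0" and \<psi>: "\<psi> = affmap p q r t b1 b2"
    using assms unfolding NA_def affine_auto_affmap by blast
  obtain k l k' l' m n m' n' :: int where I: "p = of_int k" "r = of_int l" "q = of_int k'" "t = of_int l'"
    and S: "k * m + k' * n = 1" "l * m + l' * n = 0" "k * m' + k' * n' = 0" "l * m' + l' * n' = 1"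
    using NA_pmm_std_linear_part assms det unfolding \<psi> by metis
  note E = affmap_pmm_elt_intertwine_iff[of p q r t b1 b2, folded \<psi>]
  obtain g1 g2 u w where R1: "g1 \<in> {1,-1}" "g2 \<in> {1,-1}"
    "- p = of_int g1 * p" "q = of_int g1 * q" "- r = of_int g2 * r" "t = of_int g2 * t"
    "b1 = of_int g1 * b1 + 2 * of_int u" "b2 = of_int g2 * b2 + 2 * of_int w"
    using NA_pmm_std_intertwines(1)[OF assms, of "-1" 1 0 0] unfolding E by auto
  obtain h1 h2 u' w' where R2: "h1 \<in> {1,-1}" "h2 \<in> {1,-1}"
    "p = of_int h1 * p" "- q = of_int h1 * q" "r = of_int h2 * r" "- t = of_int h2 * t"
    "b1 = of_int h1 * b1 + 2 * of_int u'" "b2 = of_int h2 * b2 + 2 * of_int w'"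
    using NA_pmm_std_intertwines(1)[OF assms, of 1 "-1" 0 0] unfolding E by auto
  have unit: "a * b = 1 \<Longrightarrow> a \<in> {1,-1}" for a b :: int
    using pos_zmult_eq_1_iff_lemma by auto
  consider (diag) "q = 0" "r = 0" | (swap) "p = 0" "t = 0"
    using R1(1-6) det by auto
  then show ?thesis
  proof cases
    case diag
    have "g1 = -1" "h2 = -1" using R1(1,3) R2(2,6) det diag by auto
    then have "b1 = of_int u" "b2 = of_int w'" using R1(7) R2(8) by simp_all
    moreover have "k \<in> {1,-1}" "l' \<in> {1,-1}" "k' = 0" "l = 0"
      using S(1,4) diag I unit by auto
    ultimately show ?thesis unfolding lattice_isometry_def signed_perm_def \<psi> I by blast
  next
    case swap
    have "g2 = -1" "h1 = -1" using R1(2,5) R2(1,4) det swap by auto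
    then have "b2 = of_int w" "b1 = of_int u'" using R1(8) R2(7) by simp_all
    moreover have "k' \<in> {1,-1}" "l \<in> {1,-1}" "k = 0" "l' = 0"
      using S(1,4) swap I unit by (auto simp: mult.commute)
    ultimately show ?thesis unfolding lattice_isometry_def signed_perm_def \<psi> I by blast
  qed
qed

lemma pmm_std_centralizer_trivial:
  assumes "affine_auto \<epsilon>" "\<And>g. g \<in> pmm_std \<Longrightarrow> \<epsilon> \<circ> g = g \<circ> \<epsilon>"
  shows "\<epsilon> = id"
proof -
  obtain p q r t b1 b2 where \<epsilon>: "\<epsilon> = affmap p q r t b1 b2"
    using assms(1) unfolding affine_auto_affmap by blast
  have "\<epsilon> \<circ> pmm_elt e1 e2 m n = pmm_elt e1 e2 m n \<circ> \<epsilon>" if "e1 \<in> {1,-1}" "e2 \<in> {1,-1}" for e1 e2 m n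
    using assms(2) pmm_eltI that by blast
  from this[of 1 1 1 0] this[of 1 1 0 1] this[of "-1" 1 0 0] this[of 1 "-1" 0 0]
  show ?thesis unfolding \<epsilon> affmap_pmm_elt_intertwine_iff affmap_id[symmetric] affmap_eq_iff by auto
qed


section \<open>Automorphisms of pmm\<close>

definition refl1 :: "int \<Rightarrow> emap" where "refl1 m = pmm_elt (-1) 1 m 0"
definition refl2 :: "int \<Rightarrow> emap" where "refl2 n = pmm_elt 1 (-1) 0 n"

text \<open>The reflections are the involutions of pmm that commute with an element of infinite order;
  this excludes the half-turns.\<close>

definition pmm_reflection :: "emap \<Rightarrow> bool" where
  "pmm_reflection g \<longleftrightarrow> g \<in> pmm_std \<and> g \<circ> g = id \<and> g \<noteq> id \<and>
     (\<exists>h\<in>pmm_std. h \<circ> g = g \<circ> h \<and> h \<circ> h \<noteq> id)"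

lemma refl1_pmm_std: "refl1 m \<in> pmm_std"
  unfolding refl1_def by (simp add: pmm_eltI)

lemma refl2_pmm_std: "refl2 n \<in> pmm_std"
  unfolding refl2_def by (simp add: pmm_eltI)

lemma refl1_commute_iff: "refl1 a \<circ> refl1 b = refl1 b \<circ> refl1 a \<longleftrightarrow> a = b"
  unfolding refl1_def pmm_elt_comp pmm_elt_eq_iff by auto

lemma refl2_commute_iff: "refl2 a \<circ> refl2 b = refl2 b \<circ> refl2 a \<longleftrightarrow> a = b"
  unfolding refl2_def pmm_elt_comp pmm_elt_eq_iff by auto

lemma refl1_refl2_commute: "refl1 a \<circ> refl2 b = refl2 b \<circ> refl1 a"
  unfolding refl1_def refl2_def pmm_elt_comp pmm_elt_eq_iff by auto

lemma refl1_neq_refl2: "refl1 a \<noteq> refl2 b"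
  unfolding refl1_def refl2_def pmm_elt_eq_iff by auto

lemma refl1_eq_iff: "refl1 a = refl1 b \<longleftrightarrow> a = b"
  unfolding refl1_def pmm_elt_eq_iff by auto

lemma refl2_eq_iff: "refl2 a = refl2 b \<longleftrightarrow> a = b"
  unfolding refl2_def pmm_elt_eq_iff by auto

lemma refl1_comp3: "refl1 a \<circ> (refl1 b \<circ> refl1 c) = refl1 (a - b + c)"
  unfolding refl1_def pmm_elt_comp pmm_elt_eq_iff by auto

lemma refl2_comp3: "refl2 a \<circ> (refl2 b \<circ> refl2 c) = refl2 (a - b + c)"
  unfolding refl2_def pmm_elt_comp pmm_elt_eq_iff by auto

lemma pmm_reflection_refl1: "pmm_reflection (refl1 m)"
proof -
  have "pmm_elt 1 1 0 1 \<in> pmm_std" by (simp add: pmm_eltI)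
  moreover have "pmm_elt 1 1 0 1 \<circ> refl1 m = refl1 m \<circ> pmm_elt 1 1 0 1"
    "pmm_elt 1 1 0 1 \<circ> pmm_elt 1 1 0 1 \<noteq> id" "refl1 m \<circ> refl1 m = id" "refl1 m \<noteq> id"
    unfolding refl1_def pmm_elt_comp pmm_elt_id[symmetric] pmm_elt_eq_iff by simp_all
  ultimately show ?thesis unfolding pmm_reflection_def using refl1_pmm_std by blast
qed

lemma pmm_reflection_refl2: "pmm_reflection (refl2 n)"
proof -
  have "pmm_elt 1 1 1 0 \<in> pmm_std" by (simp add: pmm_eltI)
  moreover have "pmm_elt 1 1 1 0 \<circ> refl2 n = refl2 n \<circ> pmm_elt 1 1 1 0"
    "pmm_elt 1 1 1 0 \<circ> pmm_elt 1 1 1 0 \<noteq> id" "refl2 n \<circ> refl2 n = id" "refl2 n \<noteq> id"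
    unfolding refl2_def pmm_elt_comp pmm_elt_id[symmetric] pmm_elt_eq_iff by simp_all
  ultimately show ?thesis unfolding pmm_reflection_def using refl2_pmm_std by blast
qed

lemma pmm_reflection_iff: "pmm_reflection g \<longleftrightarrow> (\<exists>m. g = refl1 m) \<or> (\<exists>n. g = refl2 n)"
proof
  assume g: "pmm_reflection g"
  then obtain e1 e2 m n where e: "e1 \<in> {1,-1}" "e2 \<in> {1,-1}" "g = pmm_elt e1 e2 m n"
    unfolding pmm_reflection_def by (metis pmm_stdE)
  have "pmm_elt e1 e2 m n \<circ> pmm_elt e1 e2 m n = pmm_elt 1 1 0 0"
    using g e(3) pmm_elt_id unfolding pmm_reflection_def by simp
  then have sq: "e1 * m + m = 0" "e2 * n + n = 0" unfolding pmm_elt_comp pmm_elt_eq_iff by simp_all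
  obtain h where h: "h \<in> pmm_std" "h \<circ> g = g \<circ> h" "h \<circ> h \<noteq> id"
    using g unfolding pmm_reflection_def by blast
  obtain f1 f2 k l where hf: "f1 \<in> {1,-1}" "f2 \<in> {1,-1}" "h = pmm_elt f1 f2 k l"
    using h(1) by (rule pmm_stdE)
  have "\<not> (e1 = -1 \<and> e2 = -1)"
  proof
    assume ee: "e1 = -1 \<and> e2 = -1"
    have "f1 * m + k = -k + m" "f2 * n + l = -l + n"
      using h(2) ee unfolding e(3) hf(3) pmm_elt_comp pmm_elt_eq_iff by auto
    then have "h \<circ> h = id" unfolding hf(3) pmm_elt_comp pmm_elt_id[symmetric] pmm_elt_eq_iff
      using hf(1,2) by auto
    then show False using h(3) by simp
  qed
  moreover have "\<not> (e1 = 1 \<and> e2 = 1)"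
    using g sq e(3) pmm_elt_id unfolding pmm_reflection_def by auto
  ultimately show "(\<exists>m. g = refl1 m) \<or> (\<exists>n. g = refl2 n)"
    using e sq unfolding refl1_def refl2_def by auto
qed (auto simp: pmm_reflection_refl1 pmm_reflection_refl2)

lemma int_affine_if_additive3:
  fixes \<mu> :: "int \<Rightarrow> int"
  assumes "\<And>a b c. \<mu> (a - b + c) = \<mu> a - \<mu> b + \<mu> c"
  shows "\<mu> m = \<mu> 0 + m * (\<mu> 1 - \<mu> 0)"
proof (induction m rule: int_induct[where k = 0])
  case (step1 i)
  have "\<mu> (i + 1) = \<mu> i - \<mu> 0 + \<mu> 1" using assms[of i 0 1] by simp
  then show ?case using step1 by (simp add: algebra_simps)
next
  case (step2 i)
  have "\<mu> (i - 1) = \<mu> i - \<mu> 1 + \<mu> 0" using assms[of i 1 0] by simp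
  then show ?case using step2 by (simp add: algebra_simps)
qed simp

locale pmm_automorphism =
  fixes f :: "emap \<Rightarrow> emap"
  assumes hom: "\<And>a b. a \<in> pmm_std \<Longrightarrow> b \<in> pmm_std \<Longrightarrow> f (a \<circ> b) = f a \<circ> f b"
    and image: "f ` pmm_std = pmm_std"
    and inj: "inj_on f pmm_std"
begin

lemma f_pmm_std: "g \<in> pmm_std \<Longrightarrow> f g \<in> pmm_std"
  using image by blast

lemma f_id: "f id = id"
proof -
  have "f id = f id \<circ> f id" using hom[OF pmm_std_id pmm_std_id] by simp
  moreover obtain g' where "g' \<circ> f id = id" using pmm_std_inverse[OF f_pmm_std[OF pmm_std_id]] by blast
  ultimately have "g' \<circ> (f id \<circ> f id) = g' \<circ> f id" by simp
  then have "(g' \<circ> f id) \<circ> f id = g' \<circ> f id" by (simp only: o_assoc)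
  then show ?thesis using \<open>g' \<circ> f id = id\<close> by simp
qed

lemma f_eq_iff: "a \<in> pmm_std \<Longrightarrow> b \<in> pmm_std \<Longrightarrow> f a = f b \<longleftrightarrow> a = b"
  using inj by (auto simp: inj_on_def)

lemma f_commute_iff: "a \<in> pmm_std \<Longrightarrow> b \<in> pmm_std \<Longrightarrow> f a \<circ> f b = f b \<circ> f a \<longleftrightarrow> a \<circ> b = b \<circ> a"
  using hom f_eq_iff pmm_std_comp by metis

lemma f_involution_iff: "g \<in> pmm_std \<Longrightarrow> f g \<circ> f g = id \<longleftrightarrow> g \<circ> g = id"
  using hom f_id f_eq_iff pmm_std_comp pmm_std_id by metis

lemma f_pmm_reflection_iff:
  assumes g: "g \<in> pmm_std"
  shows "pmm_reflection (f g) \<longleftrightarrow> pmm_reflection g"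
proof -
  have "f g \<noteq> id \<longleftrightarrow> g \<noteq> id" using f_id f_eq_iff[OF g pmm_std_id] by simp
  moreover have "(\<exists>h\<in>pmm_std. h \<circ> f g = f g \<circ> h \<and> h \<circ> h \<noteq> id) \<longleftrightarrow>
      (\<exists>h\<in>pmm_std. h \<circ> g = g \<circ> h \<and> h \<circ> h \<noteq> id)"
  proof
    assume "\<exists>h\<in>pmm_std. h \<circ> f g = f g \<circ> h \<and> h \<circ> h \<noteq> id"
    then obtain h' where h': "h' \<in> pmm_std" "h' \<circ> f g = f g \<circ> h'" "h' \<circ> h' \<noteq> id" by blast
    obtain h where h: "h \<in> pmm_std" "h' = f h" using h'(1) image by blast
    show "\<exists>h\<in>pmm_std. h \<circ> g = g \<circ> h \<and> h \<circ> h \<noteq> id"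
      using h h' f_commute_iff[OF h(1) g] f_involution_iff[OF h(1)] by auto
  next
    assume "\<exists>h\<in>pmm_std. h \<circ> g = g \<circ> h \<and> h \<circ> h \<noteq> id"
    then obtain h where h: "h \<in> pmm_std" "h \<circ> g = g \<circ> h" "h \<circ> h \<noteq> id" by blast
    then show "\<exists>h\<in>pmm_std. h \<circ> f g = f g \<circ> h \<and> h \<circ> h \<noteq> id"
      using f_pmm_std[OF h(1)] f_commute_iff[OF h(1) g] f_involution_iff[OF h(1)] by auto
  qed
  ultimately show ?thesis
    unfolding pmm_reflection_def using g f_pmm_std[OF g] f_involution_iff[OF g] by simp
qed

lemma f_refl_cases:
  "(\<exists>j. f (refl1 m) = refl1 j) \<or> (\<exists>j. f (refl1 m) = refl2 j)"
  "(\<exists>j. f (refl2 m) = refl1 j) \<or> (\<exists>j. f (refl2 m) = refl2 j)"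
proof -
  have "pmm_reflection (f (refl1 m))" "pmm_reflection (f (refl2 m))"
    using f_pmm_reflection_iff refl1_pmm_std refl2_pmm_std pmm_reflection_refl1 pmm_reflection_refl2
    by blast+
  then show "(\<exists>j. f (refl1 m) = refl1 j) \<or> (\<exists>j. f (refl1 m) = refl2 j)"
    "(\<exists>j. f (refl2 m) = refl1 j) \<or> (\<exists>j. f (refl2 m) = refl2 j)"
    unfolding pmm_reflection_iff by blast+
qed

lemma f_refl1_eq_refl1:
  assumes "f (refl1 0) = refl1 k0"
  shows "\<exists>j. f (refl1 m) = refl1 j"
proof -
  have "m = 0" if "f (refl1 m) = refl2 j" for j
  proof -
    have "f (refl1 m) \<circ> f (refl1 0) = f (refl1 0) \<circ> f (refl1 m)"
      using that assms refl1_refl2_commute by simp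
    then show "m = 0" using f_commute_iff[OF refl1_pmm_std refl1_pmm_std] refl1_commute_iff by blast
  qed
  then show ?thesis using f_refl_cases(1)[of m] assms by blast
qed

lemma f_refl2_eq_refl2:
  assumes "f (refl1 0) = refl1 k0"
  shows "\<exists>j. f (refl2 n) = refl2 j"
proof -
  have False if "f (refl2 n) = refl1 j" for j
  proof -
    have "f (refl2 n) \<circ> f (refl1 0) = f (refl1 0) \<circ> f (refl2 n)"
      using f_commute_iff[OF refl2_pmm_std refl1_pmm_std] refl1_refl2_commute by metis
    then have "f (refl2 n) = f (refl1 0)" using that assms refl1_commute_iff by simp
    then show False using f_eq_iff[OF refl2_pmm_std refl1_pmm_std] refl1_neq_refl2 by metis
  qed
  then show ?thesis using f_refl_cases(2)[of n] by blast
qed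

text \<open>An automorphism preserving each family of parallel reflections acts on its index as an
  affine bijection of \<open>\<int>\<close>: \<open>refl1 (a - b + c) = refl1 a \<circ> refl1 b \<circ> refl1 c\<close>.\<close>

lemma refl1_index_map:
  assumes \<mu>: "\<And>m. f (refl1 m) = refl1 (\<mu> m)"
  shows "\<exists>\<delta>\<in>{1,-1}. \<forall>m. \<mu> m = \<mu> 0 + m * \<delta>"
proof -
  have "\<mu> (a - b + c) = \<mu> a - \<mu> b + \<mu> c" for a b c
  proof -
    have "f (refl1 (a - b + c)) = f (refl1 a) \<circ> (f (refl1 b) \<circ> f (refl1 c))"
      using refl1_comp3[of a b c] hom refl1_pmm_std pmm_std_comp by metis
    then show ?thesis using \<mu> refl1_comp3 refl1_eq_iff by metis
  qed
  then have lin: "\<mu> m = \<mu> 0 + m * (\<mu> 1 - \<mu> 0)" for m by (rule int_affine_if_additive3)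
  obtain g where g: "g \<in> pmm_std" "f g = refl1 (\<mu> 0 + 1)"
    using image refl1_pmm_std by (metis imageE)
  have "pmm_reflection (f g)" unfolding g(2) pmm_reflection_iff by blast
  then have "pmm_reflection g" using f_pmm_reflection_iff[OF g(1)] by blast
  then consider m where "g = refl1 m" | n where "g = refl2 n" unfolding pmm_reflection_iff by blast
  then obtain m where m: "g = refl1 m"
  proof cases
    case 1
    then show thesis by (rule that)
  next
    case (2 n)
    have "g \<circ> refl1 0 = refl1 0 \<circ> g" unfolding 2 using refl1_refl2_commute by simp
    then have "f g \<circ> f (refl1 0) = f (refl1 0) \<circ> f g" using f_commute_iff[OF g(1) refl1_pmm_std] by blast
    then have "\<mu> 0 + 1 = \<mu> 0" unfolding g(2) \<mu> refl1_commute_iff by simp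
    then show thesis by simp
  qed
  have "refl1 (\<mu> 0 + 1) = refl1 (\<mu> 0 + m * (\<mu> 1 - \<mu> 0))"
    using g(2) m \<mu> lin by metis
  then have "m * (\<mu> 1 - \<mu> 0) = 1" unfolding refl1_eq_iff by simp
  then have "\<mu> 1 - \<mu> 0 \<in> {1,-1}" using pos_zmult_eq_1_iff_lemma by (auto simp: mult.commute)
  then show ?thesis using lin by blast
qed

lemma refl2_index_map:
  assumes \<nu>: "\<And>n. f (refl2 n) = refl2 (\<nu> n)"
  shows "\<exists>\<delta>\<in>{1,-1}. \<forall>n. \<nu> n = \<nu> 0 + n * \<delta>"
proof -
  have "\<nu> (a - b + c) = \<nu> a - \<nu> b + \<nu> c" for a b c
  proof -
    have "f (refl2 (a - b + c)) = f (refl2 a) \<circ> (f (refl2 b) \<circ> f (refl2 c))"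
      using refl2_comp3[of a b c] hom refl2_pmm_std pmm_std_comp by metis
    then show ?thesis using \<nu> refl2_comp3 refl2_eq_iff by metis
  qed
  then have lin: "\<nu> n = \<nu> 0 + n * (\<nu> 1 - \<nu> 0)" for n by (rule int_affine_if_additive3)
  obtain g where g: "g \<in> pmm_std" "f g = refl2 (\<nu> 0 + 1)"
    using image refl2_pmm_std by (metis imageE)
  have "pmm_reflection (f g)" unfolding g(2) pmm_reflection_iff by blast
  then have "pmm_reflection g" using f_pmm_reflection_iff[OF g(1)] by blast
  then consider n where "g = refl2 n" | m where "g = refl1 m" unfolding pmm_reflection_iff by blast
  then obtain n where n: "g = refl2 n"
  proof cases
    case 1
    then show thesis by (rule that)
  next
    case (2 m)
    have "g \<circ> refl2 0 = refl2 0 \<circ> g" unfolding 2 using refl1_refl2_commute by simp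
    then have "f g \<circ> f (refl2 0) = f (refl2 0) \<circ> f g" using f_commute_iff[OF g(1) refl2_pmm_std] by blast
    then have "\<nu> 0 + 1 = \<nu> 0" unfolding g(2) \<nu> refl2_commute_iff by simp
    then show thesis by simp
  qed
  have "refl2 (\<nu> 0 + 1) = refl2 (\<nu> 0 + n * (\<nu> 1 - \<nu> 0))"
    using g(2) n \<nu> lin by metis
  then have "n * (\<nu> 1 - \<nu> 0) = 1" unfolding refl2_eq_iff by simp
  then have "\<nu> 1 - \<nu> 0 \<in> {1,-1}" using pos_zmult_eq_1_iff_lemma by (auto simp: mult.commute)
  then show ?thesis using lin by blast
qed

text \<open>Every element of pmm is a product of at most two reflections of each family, so an automorphism
  is determined by its action on the reflections.\<close>

lemma conj_if_preserves_refl1: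
  assumes "f (refl1 0) = refl1 k0"
  shows "\<exists>\<psi>. lattice_isometry \<psi> \<and> (\<forall>g\<in>pmm_std. f g = conj \<psi> g)"
proof -
  obtain \<mu> where \<mu>: "\<And>m. f (refl1 m) = refl1 (\<mu> m)" using f_refl1_eq_refl1[OF assms] by metis
  obtain \<nu> where \<nu>: "\<And>n. f (refl2 n) = refl2 (\<nu> n)" using f_refl2_eq_refl2[OF assms] by metis
  obtain \<delta> \<delta>' where \<delta>: "\<delta> \<in> {1,-1}" "\<And>m. \<mu> m = \<mu> 0 + m * \<delta>" "\<delta>' \<in> {1,-1}" "\<And>n. \<nu> n = \<nu> 0 + n * \<delta>'"
    using refl1_index_map[OF \<mu>] refl2_index_map[OF \<nu>] by metis
  define \<psi> where "\<psi> = affmap (of_int \<delta>) (of_int 0) (of_int 0) (of_int \<delta>') (of_int (\<mu> 0)) (of_int (\<nu> 0))"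
  have \<psi>: "lattice_isometry \<psi>" unfolding lattice_isometry_def signed_perm_def \<psi>_def using \<delta> by blast
  have b: "bij \<psi>" using lattice_isometry_bij[OF \<psi>] .
  have "conj \<psi> (refl1 m) = refl1 (\<mu> m)" "conj \<psi> (refl2 n) = refl2 (\<nu> n)" for m n
    unfolding conj_eq_iff[OF b] unfolding \<psi>_def refl1_def refl2_def affmap_pmm_elt_intertwine_iff
    by (simp_all add: \<delta>(2)[of m] \<delta>(4)[of n] algebra_simps)
  then have fR: "f (refl1 m) = conj \<psi> (refl1 m)" "f (refl2 n) = conj \<psi> (refl2 n)" for m n
    using \<mu> \<nu> by simp_all
  have "f g = conj \<psi> g" if g: "g \<in> pmm_std" for g
  proof -
    obtain e1 e2 m n where e: "e1 \<in> {1,-1}" "e2 \<in> {1,-1}" "g = pmm_elt e1 e2 m n"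
      using g by (rule pmm_stdE)
    have X: "pmm_elt e1 1 m 0 = refl1 m \<or> pmm_elt e1 1 m 0 = refl1 m \<circ> refl1 0"
      and Y: "pmm_elt 1 e2 0 n = refl2 n \<or> pmm_elt 1 e2 0 n = refl2 n \<circ> refl2 0"
      using e(1,2) unfolding refl1_def refl2_def pmm_elt_comp by auto
    have "f (pmm_elt e1 1 m 0) = conj \<psi> (pmm_elt e1 1 m 0)"
      using X fR hom[OF refl1_pmm_std refl1_pmm_std] conj_comp[OF b] by auto
    moreover have "f (pmm_elt 1 e2 0 n) = conj \<psi> (pmm_elt 1 e2 0 n)"
      using Y fR hom[OF refl2_pmm_std refl2_pmm_std] conj_comp[OF b] by auto
    moreover have "g = pmm_elt e1 1 m 0 \<circ> pmm_elt 1 e2 0 n" "pmm_elt e1 1 m 0 \<in> pmm_std"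
      "pmm_elt 1 e2 0 n \<in> pmm_std"
      unfolding e(3) pmm_elt_comp using e by (simp_all add: pmm_eltI)
    ultimately show ?thesis using hom conj_comp[OF b] by simp
  qed
  then show ?thesis using \<psi> by blast
qed

end

definition coord_swap :: emap where "coord_swap = affmap 0 1 1 0 0 0"

lemma lattice_isometry_coord_swap: "lattice_isometry coord_swap"
  unfolding lattice_isometry_def signed_perm_def coord_swap_def
  by (intro exI[of _ 0] exI[of _ 1] exI[of _ 1] exI[of _ 0] exI[of _ 0] exI[of _ 0]) simp

lemma bij_coord_swap: "bij coord_swap"
  using lattice_isometry_bij[OF lattice_isometry_coord_swap] .

lemma conj_coord_swap_pmm_elt: "conj coord_swap (pmm_elt e1 e2 m n) = pmm_elt e2 e1 n m"
  unfolding conj_eq_iff[OF bij_coord_swap] unfolding coord_swap_def affmap_pmm_elt_intertwine_iff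
  by simp

lemma conj_coord_swap_conj_coord_swap: "conj coord_swap (conj coord_swap g) = g"
proof -
  have "coord_swap \<circ> coord_swap = id" unfolding coord_swap_def affmap_comp affmap_id[symmetric] by simp
  then show ?thesis using conj_conj[OF bij_coord_swap bij_coord_swap] by simp
qed

text \<open>If the automorphism exchanges the two families of reflections, composing it with the
  conjugation by the coordinate swap reduces to the previous case.\<close>

lemma pmm_automorphism_conj:
  assumes "pmm_automorphism f"
  shows "\<exists>\<psi>. lattice_isometry \<psi> \<and> (\<forall>g\<in>pmm_std. f g = conj \<psi> g)"
proof -
  interpret pmm_automorphism f by fact
  consider k0 where "f (refl1 0) = refl1 k0" | k0 where "f (refl1 0) = refl2 k0"
    using f_refl_cases(1) by blast
  then show ?thesis
  proof cases
    case 1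
    then show ?thesis by (rule conj_if_preserves_refl1)
  next
    case (2 k0)
    define f' where "f' = (\<lambda>g. conj coord_swap (f g))"
    have "pmm_automorphism f'"
    proof
      show "f' (a \<circ> b) = f' a \<circ> f' b" if "a \<in> pmm_std" "b \<in> pmm_std" for a b
        unfolding f'_def hom[OF that] conj_comp[OF bij_coord_swap] ..
      have "conj coord_swap ` pmm_std = pmm_std"
        using lattice_isometry_NA_pmm_std[OF lattice_isometry_coord_swap] unfolding NA_def by blast
      then show "f' ` pmm_std = pmm_std" unfolding f'_def using image by (metis image_image)
      show "inj_on f' pmm_std" unfolding f'_def using inj conj_inj[OF bij_coord_swap]
        by (simp add: inj_on_def)
    qed
    moreover have "f' (refl1 0) = refl1 k0"
      unfolding f'_def 2 by (simp add: refl1_def refl2_def conj_coord_swap_pmm_elt)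
    ultimately obtain \<psi> where \<psi>: "lattice_isometry \<psi>" "\<forall>g\<in>pmm_std. f' g = conj \<psi> g"
      using pmm_automorphism.conj_if_preserves_refl1 by blast
    have "f g = conj (coord_swap \<circ> \<psi>) g" if "g \<in> pmm_std" for g
    proof -
      have "f g = conj coord_swap (f' g)" unfolding f'_def conj_coord_swap_conj_coord_swap ..
      also have "\<dots> = conj coord_swap (conj \<psi> g)" using \<psi>(2) that by simp
      finally show ?thesis using conj_conj[OF bij_coord_swap lattice_isometry_bij[OF \<psi>(1)]] by simp
    qed
    then show ?thesis using lattice_isometry_comp[OF lattice_isometry_coord_swap \<psi>(1)] by blast
  qed
qed


section \<open>Squares, corners and unit cells\<close>

definition closed_sq :: "real \<Rightarrow> real \<Rightarrow> real \<Rightarrow> pt set" where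
  "closed_sq h1 h2 \<rho> = {z. \<bar>z$1 - h1\<bar> \<le> \<rho> \<and> \<bar>z$2 - h2\<bar> \<le> \<rho>}"

definition open_sq :: "real \<Rightarrow> pt set" where
  "open_sq s = {z. \<bar>z$1\<bar> < s \<and> \<bar>z$2\<bar> < s}"

definition corner :: "pt set \<Rightarrow> pt \<Rightarrow> bool" where
  "corner C z \<longleftrightarrow> z \<in> C \<and> (\<forall>a\<in>C. \<forall>b\<in>C. z = (1/2) *\<^sub>R (a + b) \<longrightarrow> a = b)"

lemma open_sq_subset_closed_sq: "open_sq s \<subseteq> closed_sq 0 0 s"
  unfolding open_sq_def closed_sq_def by auto

lemma corner_image:
  assumes inj: "inj f" and mid: "\<And>a b. f ((1/2) *\<^sub>R (a + b)) = (1/2) *\<^sub>R (f a + f b)"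
    and img: "f ` C = D" and c: "corner C z"
  shows "corner D (f z)"
  unfolding corner_def
proof (intro conjI ballI impI)
  show "f z \<in> D" using c img unfolding corner_def by blast
  fix a b assume ab: "a \<in> D" "b \<in> D" "f z = (1/2) *\<^sub>R (a + b)"
  obtain a' b' where a': "a' \<in> C" "a = f a'" and b': "b' \<in> C" "b = f b'" using ab img by blast
  have "f z = f ((1/2) *\<^sub>R (a' + b'))" using ab(3) a' b' mid by simp
  then have "z = (1/2) *\<^sub>R (a' + b')" using inj by (simp add: inj_eq)
  then show "a = b" using c a' b' unfolding corner_def by blast
qed

lemma corner_closed_sq:
  assumes "\<rho> > 0" "corner (closed_sq h1 h2 \<rho>) z"
  shows "\<bar>z$1 - h1\<bar> = \<rho> \<and> \<bar>z$2 - h2\<bar> = \<rho>"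
proof (rule ccontr)
  assume n: "\<not> (\<bar>z$1 - h1\<bar> = \<rho> \<and> \<bar>z$2 - h2\<bar> = \<rho>)"
  have z: "\<bar>z$1 - h1\<bar> \<le> \<rho>" "\<bar>z$2 - h2\<bar> \<le> \<rho>"
    using assms(2) unfolding corner_def closed_sq_def by auto
  obtain w where w: "w \<noteq> 0" "z + w \<in> closed_sq h1 h2 \<rho>" "z - w \<in> closed_sq h1 h2 \<rho>"
  proof (cases "\<bar>z$1 - h1\<bar> = \<rho>")
    case False
    let ?w = "vector [\<rho> - \<bar>z$1 - h1\<bar>, 0] :: pt"
    show thesis
    proof (rule that[of ?w])
      show "?w \<noteq> 0" using False z(1) by (simp add: vec2_eq_iff)
      show "z + ?w \<in> closed_sq h1 h2 \<rho>" "z - ?w \<in> closed_sq h1 h2 \<rho>"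
        using z unfolding closed_sq_def by auto
    qed
  next
    case True
    then have lt: "\<bar>z$2 - h2\<bar> < \<rho>" using n z by simp
    let ?w = "vector [0, \<rho> - \<bar>z$2 - h2\<bar>] :: pt"
    show thesis
    proof (rule that[of ?w])
      show "?w \<noteq> 0" using lt by (simp add: vec2_eq_iff)
      show "z + ?w \<in> closed_sq h1 h2 \<rho>" "z - ?w \<in> closed_sq h1 h2 \<rho>"
        using z unfolding closed_sq_def by auto
    qed
  qed
  moreover have "z = (1/2) *\<^sub>R ((z + w) + (z - w))" by (simp add: vec2_eq_iff)
  ultimately have "z + w = z - w" using assms(2) unfolding corner_def by blast
  then show False using \<open>w \<noteq> 0\<close> by (simp add: vec2_eq_iff)
qed

lemma closed_sq_corner:
  assumes "\<rho> > 0" "e1 \<in> {1,-1}" "e2 \<in> {1,-1}"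
  shows "corner (closed_sq h1 h2 \<rho>) (vector [h1 + e1 * \<rho>, h2 + e2 * \<rho>])"
  unfolding corner_def
proof (intro conjI ballI impI)
  show "vector [h1 + e1 * \<rho>, h2 + e2 * \<rho>] \<in> closed_sq h1 h2 \<rho>"
    using assms unfolding closed_sq_def by auto
  fix a b assume ab: "a \<in> closed_sq h1 h2 \<rho>" "b \<in> closed_sq h1 h2 \<rho>"
    "vector [h1 + e1 * \<rho>, h2 + e2 * \<rho>] = (1/2) *\<^sub>R (a + b)"
  then have "a$1 + b$1 = 2 * (h1 + e1 * \<rho>)" "a$2 + b$2 = 2 * (h2 + e2 * \<rho>)"
    by (simp_all add: vec2_eq_iff)
  then show "a = b" using ab(1,2) assms(2,3) unfolding closed_sq_def by (auto simp: vec2_eq_iff)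
qed

lemma mult_eq_0_if_abs_add_eq_abs_diff:
  fixes y a k :: real
  assumes "\<bar>y + a\<bar> = k" "\<bar>y - a\<bar> = k"
  shows "y * a = 0"
proof -
  have "(y + a)^2 = (y - a)^2" using assms by (metis power2_abs)
  then show ?thesis by (simp add: power2_eq_square algebra_simps)
qed

text \<open>An affine bijection maps corners to corners; comparing the images of the four corners of one
  square with the corners of the other forces the linear part to be a scaled signed permutation.\<close>

lemma affmap_closed_sq_corners:
  assumes d: "p*t - q*r \<noteq> 0" and \<rho>: "\<rho> > 0" "\<rho>' > 0"
    and img: "affmap p q r t b1 b2 ` closed_sq h1 h2 \<rho> = closed_sq h1' h2' \<rho>'"
    and e: "e1 \<in> {1,-1}" "e2 \<in> {1,-1}"
  shows "\<bar>(p*h1 + q*h2 + b1 - h1') + \<rho>*(e1*p + e2*q)\<bar> = \<rho>'"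
    and "\<bar>(r*h1 + t*h2 + b2 - h2') + \<rho>*(e1*r + e2*t)\<bar> = \<rho>'"
proof -
  let ?f = "affmap p q r t b1 b2"
  have inj: "inj ?f" using bij_affmap[OF d] bij_is_inj by blast
  have mid: "?f ((1/2) *\<^sub>R (a + b)) = (1/2) *\<^sub>R (?f a + ?f b)" for a b
    by (simp add: vec2_eq_iff algebra_simps)
  show "\<bar>(p*h1 + q*h2 + b1 - h1') + \<rho>*(e1*p + e2*q)\<bar> = \<rho>'"
    and "\<bar>(r*h1 + t*h2 + b2 - h2') + \<rho>*(e1*r + e2*t)\<bar> = \<rho>'"
    using corner_closed_sq[OF \<rho>(2) corner_image[OF inj mid img closed_sq_corner[OF \<rho>(1) e]]]
    by (simp_all add: algebra_simps)
qed

lemma affmap_closed_sq_onto: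
  assumes d: "p*t - q*r \<noteq> 0" and \<rho>: "\<rho> > 0" "\<rho>' > 0"
    and img: "affmap p q r t b1 b2 ` closed_sq h1 h2 \<rho> = closed_sq h1' h2' \<rho>'"
  shows "affmap p q r t b1 b2 (vector [h1, h2]) = vector [h1', h2']"
    and "(q = 0 \<and> r = 0 \<and> \<bar>p\<bar> = \<rho>'/\<rho> \<and> \<bar>t\<bar> = \<rho>'/\<rho>) \<or> (p = 0 \<and> t = 0 \<and> \<bar>q\<bar> = \<rho>'/\<rho> \<and> \<bar>r\<bar> = \<rho>'/\<rho>)"
proof -
  define Y1 where "Y1 = p*h1 + q*h2 + b1 - h1'"
  define Y2 where "Y2 = r*h1 + t*h2 + b2 - h2'"
  note c = affmap_closed_sq_corners[OF d \<rho> img, folded Y1_def Y2_def]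
  have a1: "\<bar>Y1 + \<rho>*(p + q)\<bar> = \<rho>'" "\<bar>Y1 - \<rho>*(p + q)\<bar> = \<rho>'"
    "\<bar>Y1 + \<rho>*(p - q)\<bar> = \<rho>'" "\<bar>Y1 - \<rho>*(p - q)\<bar> = \<rho>'"
    using c(1)[of 1 1] c(1)[of "-1" "-1"] c(1)[of 1 "-1"] c(1)[of "-1" 1] by (simp_all add: algebra_simps)
  have a2: "\<bar>Y2 + \<rho>*(r + t)\<bar> = \<rho>'" "\<bar>Y2 - \<rho>*(r + t)\<bar> = \<rho>'"
    "\<bar>Y2 + \<rho>*(r - t)\<bar> = \<rho>'" "\<bar>Y2 - \<rho>*(r - t)\<bar> = \<rho>'"
    using c(2)[of 1 1] c(2)[of "-1" "-1"] c(2)[of 1 "-1"] c(2)[of "-1" 1] by (simp_all add: algebra_simps)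
  have Y1: "Y1 = 0"
  proof (rule ccontr)
    assume "Y1 \<noteq> 0"
    then have "p = 0" "q = 0"
      using mult_eq_0_if_abs_add_eq_abs_diff[OF a1(1,2)] mult_eq_0_if_abs_add_eq_abs_diff[OF a1(3,4)] \<rho>(1) by simp_all
    then show False using d by simp
  qed
  have Y2: "Y2 = 0"
  proof (rule ccontr)
    assume "Y2 \<noteq> 0"
    then have "r = 0" "t = 0"
      using mult_eq_0_if_abs_add_eq_abs_diff[OF a2(1,2)] mult_eq_0_if_abs_add_eq_abs_diff[OF a2(3,4)] \<rho>(1) by simp_all
    then show False using d by simp
  qed
  show "affmap p q r t b1 b2 (vector [h1, h2]) = vector [h1', h2']" using Y1 Y2 unfolding Y1_def Y2_def
    by (simp add: vec2_eq_iff)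
  have "\<rho> * \<bar>p + q\<bar> = \<rho>'" "\<rho> * \<bar>p - q\<bar> = \<rho>'" "\<rho> * \<bar>r + t\<bar> = \<rho>'" "\<rho> * \<bar>r - t\<bar> = \<rho>'"
    using a1(1,3) a2(1,3) Y1 Y2 \<rho>(1) by (simp_all add: abs_mult)
  then have pq: "\<bar>p + q\<bar> = \<rho>'/\<rho>" "\<bar>p - q\<bar> = \<rho>'/\<rho>" and rt: "\<bar>r + t\<bar> = \<rho>'/\<rho>" "\<bar>r - t\<bar> = \<rho>'/\<rho>"
    using \<rho>(1) by (simp_all add: field_simps)
  have "p * q = 0" "r * t = 0"
    using mult_eq_0_if_abs_add_eq_abs_diff[of p q "\<rho>'/\<rho>"] mult_eq_0_if_abs_add_eq_abs_diff[of r t "\<rho>'/\<rho>"] pq rt by simp_all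
  then show "(q = 0 \<and> r = 0 \<and> \<bar>p\<bar> = \<rho>'/\<rho> \<and> \<bar>t\<bar> = \<rho>'/\<rho>) \<or> (p = 0 \<and> t = 0 \<and> \<bar>q\<bar> = \<rho>'/\<rho> \<and> \<bar>r\<bar> = \<rho>'/\<rho>)"
    using pq rt d by auto
qed

lemma open_sq_segment:
  assumes "y \<in> open_sq s"
  shows "\<exists>\<tau>>0. y + \<tau> *\<^sub>R w \<in> open_sq s \<and> y - \<tau> *\<^sub>R w \<in> open_sq s"
proof -
  define m where "m = min (s - \<bar>y$1\<bar>) (s - \<bar>y$2\<bar>)"
  have m: "m > 0" using assms unfolding open_sq_def m_def by auto
  define \<tau> where "\<tau> = m / (\<bar>w$1\<bar> + \<bar>w$2\<bar> + 1)"
  have \<tau>: "\<tau> > 0" using m unfolding \<tau>_def by (simp add: add_pos_nonneg)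
  have "\<tau> * (\<bar>w$1\<bar> + \<bar>w$2\<bar> + 1) = m" unfolding \<tau>_def
    by (simp add: add_pos_nonneg order.strict_implies_not_eq[symmetric])
  then have "\<tau> * \<bar>w$1\<bar> + \<tau> * \<bar>w$2\<bar> + \<tau> = m" by (simp add: algebra_simps)
  moreover have "\<tau> * \<bar>w$1\<bar> \<ge> 0" "\<tau> * \<bar>w$2\<bar> \<ge> 0" using \<tau> by simp_all
  ultimately have b: "\<tau> * \<bar>w$1\<bar> < m" "\<tau> * \<bar>w$2\<bar> < m" using \<tau> by linarith+
  have tw: "\<bar>\<tau> * w$1\<bar> = \<tau> * \<bar>w$1\<bar>" "\<bar>\<tau> * w$2\<bar> = \<tau> * \<bar>w$2\<bar>" using \<tau> by (simp_all add: abs_mult)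
  have mm: "m \<le> s - \<bar>y$1\<bar>" "m \<le> s - \<bar>y$2\<bar>" unfolding m_def by simp_all
  have tri: "\<bar>a + b\<bar> \<le> \<bar>a\<bar> + \<bar>b\<bar>" "\<bar>a - b\<bar> \<le> \<bar>a\<bar> + \<bar>b\<bar>" for a b :: real by arith+
  have "\<bar>y$1 + \<tau> * w$1\<bar> < s" "\<bar>y$1 - \<tau> * w$1\<bar> < s"
    using tri[of "y$1" "\<tau> * w$1"] tw(1) b(1) mm(1) by linarith+
  moreover have "\<bar>y$2 + \<tau> * w$2\<bar> < s" "\<bar>y$2 - \<tau> * w$2\<bar> < s"
    using tri[of "y$2" "\<tau> * w$2"] tw(2) b(2) mm(2) by linarith+
  ultimately show ?thesis using \<tau> unfolding open_sq_def by auto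
qed

lemma affmap_add_preimage_basis:
  assumes "p*t - q*r \<noteq> 0"
  defines "w1 \<equiv> vector [t/(p*t - q*r), -r/(p*t - q*r)]" and "w2 \<equiv> vector [-q/(p*t - q*r), p/(p*t - q*r)]"
  shows "affmap p q r t b1 b2 (y + \<tau> *\<^sub>R w1) = affmap p q r t b1 b2 y + vector [\<tau>, 0]"
    and "affmap p q r t b1 b2 (y - \<tau> *\<^sub>R w1) = affmap p q r t b1 b2 y - vector [\<tau>, 0]"
    and "affmap p q r t b1 b2 (y + \<tau> *\<^sub>R w2) = affmap p q r t b1 b2 y + vector [0, \<tau>]"
    and "affmap p q r t b1 b2 (y - \<tau> *\<^sub>R w2) = affmap p q r t b1 b2 y - vector [0, \<tau>]"
proof -
  have e: "p * w1$1 + q * w1$2 = 1" "r * w1$1 + t * w1$2 = 0"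
    "p * w2$1 + q * w2$2 = 0" "r * w2$1 + t * w2$2 = 1"
    unfolding w1_def w2_def using assms(1) by (simp_all add: divide_simps; simp add: algebra_simps)+
  have g: "affmap p q r t b1 b2 (y + \<tau> *\<^sub>R w) = affmap p q r t b1 b2 y +
      \<tau> *\<^sub>R vector [p * w$1 + q * w$2, r * w$1 + t * w$2]"
    "affmap p q r t b1 b2 (y - \<tau> *\<^sub>R w) = affmap p q r t b1 b2 y -
      \<tau> *\<^sub>R vector [p * w$1 + q * w$2, r * w$1 + t * w$2]" for w
    by (simp_all add: vec2_eq_iff algebra_simps)
  show "affmap p q r t b1 b2 (y + \<tau> *\<^sub>R w1) = affmap p q r t b1 b2 y + vector [\<tau>, 0]"
    and "affmap p q r t b1 b2 (y - \<tau> *\<^sub>R w1) = affmap p q r t b1 b2 y - vector [\<tau>, 0]"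
    and "affmap p q r t b1 b2 (y + \<tau> *\<^sub>R w2) = affmap p q r t b1 b2 y + vector [0, \<tau>]"
    and "affmap p q r t b1 b2 (y - \<tau> *\<^sub>R w2) = affmap p q r t b1 b2 y - vector [0, \<tau>]"
    unfolding g e by (simp_all add: vec2_eq_iff)
qed

lemma unit_interval_sign_shift:
  fixes x :: real and e k m :: int
  assumes e: "e \<in> {1,-1}" and x: "of_int k \<le> x" "x \<le> of_int k + 1"
    and y: "of_int k \<le> of_int e * x + 2 * of_int m" "of_int e * x + 2 * of_int m \<le> of_int k + 1"
  shows "of_int e * x + 2 * of_int m = x"
proof (cases "e = 1")
  case True
  then have "of_int (2*m) \<le> (1::real)" "of_int (-1) \<le> (of_int (2*m)::real)" using x y by simp_all
  then have "2*m \<le> 1" "-1 \<le> 2*m" by (simp_all only: of_int_le_iff of_int_1)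
  then show ?thesis using True by simp
next
  case False
  then have e: "e = -1" using e by simp
  then have "of_int (2*m) \<le> (of_int (2*k+2)::real)" "(of_int (2*k)::real) \<le> of_int (2*m)"
    using x y by simp_all
  then have "2*m \<le> 2*k+2" "2*k \<le> 2*m" by (simp_all only: of_int_le_iff)
  then have "m = k \<or> m = k + 1" by auto
  then show ?thesis using x y e by auto
qed

lemma abs_eq_times_sign: "\<bar>x\<bar> = k \<Longrightarrow> \<exists>e\<in>{1,-1::int}. x = k * of_int e"
  for x k :: real
  by (cases "x \<ge> 0") (auto intro: bexI[of _ 1] bexI[of _ "-1"])

lemma closed_sq_unit_cell_iff: "\<bar>x - (h + 1/2)\<bar> \<le> 1/2 \<longleftrightarrow> h \<le> x \<and> x \<le> h + 1" for x h :: real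
  by arith

lemma pmm_std_unit_cell:
  assumes g: "g \<in> pmm_std" and w: "w \<in> closed_sq (of_int k + 1/2) (of_int l + 1/2) (1/2)"
    and gw: "g w \<in> closed_sq (of_int k + 1/2) (of_int l + 1/2) (1/2)"
  shows "g w = w"
proof -
  obtain e1 e2 m n where e: "e1 \<in> {1,-1}" "e2 \<in> {1,-1}" "g = pmm_elt e1 e2 m n"
    using g by (rule pmm_stdE)
  have w': "of_int k \<le> w$1" "w$1 \<le> of_int k + 1" "of_int l \<le> w$2" "w$2 \<le> of_int l + 1"
    and gw': "of_int k \<le> g w$1" "g w$1 \<le> of_int k + 1" "of_int l \<le> g w$2" "g w$2 \<le> of_int l + 1"
    using w gw unfolding closed_sq_def closed_sq_unit_cell_iff by auto
  show ?thesis
    using unit_interval_sign_shift[OF e(1) w'(1,2)] unit_interval_sign_shift[OF e(2) w'(3,4)] gw' e(3)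
    by (simp add: vec2_eq_iff)
qed

lemma segment_avoiding_int:
  fixes A B :: real and k :: int
  assumes kB: "of_int k < B" "B < of_int k + 1"
    and nI: "\<And>l. 0 < l \<Longrightarrow> l < 1 \<Longrightarrow> l * A + (1 - l) * B \<notin> \<int>"
  shows "of_int k \<le> A \<and> A \<le> of_int k + 1"
proof (rule ccontr)
  assume "\<not> (of_int k \<le> A \<and> A \<le> of_int k + 1)"
  then consider "A > of_int k + 1" | "A < of_int k" by linarith
  then show False
  proof cases
    case 1
    define l where "l = (of_int k + 1 - B) / (A - B)"
    have l: "0 < l" "l < 1" unfolding l_def using 1 kB by (simp_all add: field_simps)
    have "l * A + (1 - l) * B = B + l * (A - B)" by (simp add: algebra_simps)
    also have "\<dots> = of_int (k + 1)" unfolding l_def using 1 kB by simp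
    finally show False using nI[OF l] by (metis Ints_of_int)
  next
    case 2
    define l where "l = (B - of_int k) / (B - A)"
    have l: "0 < l" "l < 1" unfolding l_def using 2 kB by (simp_all add: field_simps)
    have "l * A + (1 - l) * B = B - l * (B - A)" by (simp add: algebra_simps)
    also have "\<dots> = of_int k" unfolding l_def using 2 kB by simp
    finally show False using nI[OF l] by (metis Ints_of_int)
  qed
qed

lemma floor_less_not_Ints:
  fixes B :: real
  assumes "B \<notin> \<int>"
  shows "of_int \<lfloor>B\<rfloor> < B" "B < of_int \<lfloor>B\<rfloor> + 1"
  using assms of_int_floor_le[of B] real_of_int_floor_add_one_gt[of B]
  by (metis Ints_of_int order.not_eq_order_implies_strict)+


lemma half_int_coord_to_half_int:
  "\<exists>f m. f \<in> {1,-1::int} \<and> of_int f * (of_int j + 1/2) + 2 * of_int m = of_int k + (1/2::real)"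
proof (cases "even (k - j)")
  case True
  then obtain m where "k - j = 2 * m" by (metis evenE)
  then have "(2::real) * of_int m = of_int k - of_int j" by (metis of_int_diff of_int_mult of_int_numeral)
  then have "of_int 1 * (of_int j + 1/2) + 2 * of_int m = of_int k + (1/2::real)" by simp
  then show ?thesis by blast
next
  case False
  then have "even (k + j + 1)" by presburger
  then obtain m where "k + j + 1 = 2 * m" by (metis evenE)
  then have "(2::real) * of_int m = of_int k + of_int j + 1"
    by (metis of_int_add of_int_mult of_int_numeral of_int_1)
  then have "of_int (-1) * (of_int j + 1/2) + 2 * of_int m = of_int k + (1/2::real)" by simp
  then show ?thesis by blast
qed

lemma pmm_std_moves_half_int_point:
  obtains g where "g \<in> pmm_std"
    "g (vector [of_int j + 1/2, of_int j' + 1/2]) = vector [of_int k + 1/2, of_int l + 1/2]"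
proof -
  obtain f1 m f2 n where "f1 \<in> {1,-1}" "of_int f1 * (of_int j + 1/2) + 2 * of_int m = of_int k + (1/2::real)"
    "f2 \<in> {1,-1}" "of_int f2 * (of_int j' + 1/2) + 2 * of_int n = of_int l + (1/2::real)"
    using half_int_coord_to_half_int by metis
  then show thesis using that[of "pmm_elt f1 f2 m n"] by (simp add: pmm_eltI vec2_eq_iff)
qed

lemma lattice_isometry_half_int_point:
  assumes "lattice_isometry \<psi>"
  obtains j j' where "\<psi> (vector [of_int k + 1/2, of_int l + 1/2]) = vector [of_int j + 1/2, of_int j' + 1/2]"
proof -
  have half: "\<exists>j::int. of_int a * (of_int k + 1/2) + of_int b * (of_int l + 1/2) + of_int c = of_int j + (1/2::real)"
    if "(a = 1 \<or> a = -1) \<and> b = 0 \<or> a = 0 \<and> (b = 1 \<or> b = -1)" for a b c :: int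
  proof -
    from that consider "a = 1" "b = 0" | "a = -1" "b = 0" | "a = 0" "b = 1" | "a = 0" "b = -1" by blast
    then show ?thesis
    proof cases
      case 1 then show ?thesis by (intro exI[of _ "k + c"]) simp
    next
      case 2 then show ?thesis by (intro exI[of _ "c - k - 1"]) simp
    next
      case 3 then show ?thesis by (intro exI[of _ "l + c"]) simp
    next
      case 4 then show ?thesis by (intro exI[of _ "c - l - 1"]) simp
    qed
  qed
  obtain p q r t b1 b2 :: int where "signed_perm p q r t"
    and \<psi>: "\<psi> = affmap (of_int p) (of_int q) (of_int r) (of_int t) (of_int b1) (of_int b2)"
    using assms unfolding lattice_isometry_def by blast
  then have "(p = 1 \<or> p = -1) \<and> q = 0 \<or> p = 0 \<and> (q = 1 \<or> q = -1)"
    "(r = 1 \<or> r = -1) \<and> t = 0 \<or> r = 0 \<and> (t = 1 \<or> t = -1)"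
    unfolding signed_perm_def by auto
  from half[OF this(1), of b1] half[OF this(2), of b2]
  obtain j j' where "of_int p * (of_int k + 1/2) + of_int q * (of_int l + 1/2) + of_int b1 = of_int j + (1/2::real)"
    "of_int r * (of_int k + 1/2) + of_int t * (of_int l + 1/2) + of_int b2 = of_int j' + (1/2::real)"
    by blast
  then show thesis using that[of j j'] unfolding \<psi> by (simp add: vec2_eq_iff)
qed


section \<open>The point group of the square\<close>

definition coord_flip :: emap where "coord_flip = affmap (-1) 0 0 1 0 0"

definition D4 :: "emap set" where
  "D4 = {affmap (of_int a) (of_int b) (of_int c) (of_int d) 0 0 | a b c d. signed_perm a b c d}"

lemma D4_eq:
  "D4 = {id, coord_flip, coord_swap, coord_flip \<circ> coord_swap, coord_swap \<circ> coord_flip,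
    coord_flip \<circ> coord_swap \<circ> coord_flip, coord_swap \<circ> coord_flip \<circ> coord_swap,
    coord_flip \<circ> coord_swap \<circ> coord_flip \<circ> coord_swap}"
proof -
  have "D4 = {affmap 1 0 0 1 0 0, affmap (-1) 0 0 1 0 0, affmap 0 1 1 0 0 0, affmap 0 (-1) 1 0 0 0,
      affmap 0 1 (-1) 0 0 0, affmap 0 (-1) (-1) 0 0 0, affmap 1 0 0 (-1) 0 0, affmap (-1) 0 0 (-1) 0 0}"
  proof (intro equalityI subsetI)
    fix x assume "x \<in> D4"
    then obtain a b c d where x: "x = affmap (of_int a) (of_int b) (of_int c) (of_int d) 0 0"
      "signed_perm a b c d" unfolding D4_def by blast
    from x(2) consider "b = 0" "c = 0" "a = 1 \<or> a = -1" "d = 1 \<or> d = -1"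
      | "a = 0" "d = 0" "b = 1 \<or> b = -1" "c = 1 \<or> c = -1" unfolding signed_perm_def by auto
    then show "x \<in> {affmap 1 0 0 1 0 0, affmap (-1) 0 0 1 0 0, affmap 0 1 1 0 0 0, affmap 0 (-1) 1 0 0 0,
      affmap 0 1 (-1) 0 0 0, affmap 0 (-1) (-1) 0 0 0, affmap 1 0 0 (-1) 0 0, affmap (-1) 0 0 (-1) 0 0}"
      by cases (auto simp: x(1))
  next
    have e: "affmap (of_int a) (of_int b) (of_int c) (of_int d) 0 0 \<in> D4" if "signed_perm a b c d" for a b c d
      unfolding D4_def using that by blast
    fix x assume "x \<in> {affmap 1 0 0 1 0 0, affmap (-1) 0 0 1 0 0, affmap 0 1 1 0 0 0, affmap 0 (-1) 1 0 0 0,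
      affmap 0 1 (-1) 0 0 0, affmap 0 (-1) (-1) 0 0 0, affmap 1 0 0 (-1) 0 0, affmap (-1) 0 0 (-1) 0 0}"
    then show "x \<in> D4"
      using e[of 1 0 0 1] e[of "-1" 0 0 1] e[of 0 1 1 0] e[of 0 "-1" 1 0] e[of 0 1 "-1" 0]
        e[of 0 "-1" "-1" 0] e[of 1 0 0 "-1"] e[of "-1" 0 0 "-1"]
      unfolding signed_perm_def by auto
  qed
  then show ?thesis by (simp add: coord_flip_def coord_swap_def affmap_comp affmap_id[symmetric])
qed

lemma card_D4: "card D4 = 8"
  unfolding D4_eq by (simp add: coord_flip_def coord_swap_def affmap_comp affmap_id[symmetric] affmap_eq_iff)

lemma D4_open_sq: "G \<in> D4 \<Longrightarrow> y \<in> open_sq s \<Longrightarrow> G y \<in> open_sq s"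
  unfolding D4_def signed_perm_def open_sq_def by (auto simp: abs_minus_commute)

lemma dist_vec2: "dist (a::pt) b = sqrt ((a$1 - b$1)^2 + (a$2 - b$2)^2)"
  unfolding dist_norm norm_eq_sqrt_inner by (simp add: inner_vec_def sum_2 power2_eq_square)

lemma D4_isometry: "G \<in> D4 \<Longrightarrow> dist (G a) (G b) = dist a b"
  unfolding D4_def signed_perm_def dist_vec2 by (auto simp: power2_eq_square algebra_simps)


section \<open>A pmm group whose quotient is a square\<close>

locale pmm_square =
  fixes M :: "emap set" and c u v :: pt and s :: real and \<phi> :: emap
  assumes phi: "affine_auto \<phi>"
    and M_eq: "M = conj \<phi> ` pmm_std"
    and quotient_square: "quotient_is_square M c u v s"
begin

definition \<phi>' :: emap where "\<phi>' = inv_into UNIV \<phi>"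

lemma phi_bij: "bij \<phi>"
  using affine_auto_bij[OF phi] .

lemma phi'_affine: "affine_auto \<phi>'"
  unfolding \<phi>'_def using affine_auto_inv[OF phi] .

lemma phi'_bij: "bij \<phi>'"
  using affine_auto_bij[OF phi'_affine] .

lemma phi_phi' [simp]: "\<phi> (\<phi>' x) = x"
  unfolding \<phi>'_def using phi_bij by (simp add: bij_is_surj surj_f_inv_f)

lemma NA_M: "NA M = conj \<phi> ` NA pmm_std"
  unfolding M_eq using NA_conj_image[OF phi] .

lemma M_id: "id \<in> M"
  unfolding M_eq using pmm_std_id conj_id_right[OF phi_bij] by (metis image_eqI)

lemma M_comp:
  assumes "g \<in> M" "h \<in> M"
  shows "g \<circ> h \<in> M"
proof -
  obtain p p' where "p \<in> pmm_std" "p' \<in> pmm_std" "g = conj \<phi> p" "h = conj \<phi> p'"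
    using assms unfolding M_eq by blast
  then show ?thesis unfolding M_eq using pmm_std_comp conj_comp[OF phi_bij] by (metis image_eqI)
qed

lemma M_inverse:
  assumes "g \<in> M"
  shows "\<exists>g'\<in>M. g \<circ> g' = id \<and> g' \<circ> g = id"
proof -
  obtain p p' where p: "p \<in> pmm_std" "g = conj \<phi> p" "p' \<in> pmm_std" "p \<circ> p' = id" "p' \<circ> p = id"
    using assms pmm_std_inverse unfolding M_eq by blast
  then have "g \<circ> conj \<phi> p' = id" "conj \<phi> p' \<circ> g = id"
    by (simp_all add: conj_comp[OF phi_bij, symmetric] conj_id_right[OF phi_bij])
  then show ?thesis using p(3) unfolding M_eq by blast
qed

lemma M_NA:
  assumes "g \<in> M"
  shows "g \<in> NA M"
proof -
  obtain p where p: "p \<in> pmm_std" "g = conj \<phi> p" using assms unfolding M_eq by blast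
  have "p \<in> NA pmm_std" using lattice_isometry_NA_pmm_std[OF pmm_std_lattice_isometry[OF p(1)]] .
  then show ?thesis unfolding NA_M p(2) by (rule imageI)
qed

lemma orb_self: "x \<in> orb M x"
  unfolding orb_def using M_id by (metis id_apply image_eqI)

lemma orb_M_eq_iff: "orb M z = orb M z' \<longleftrightarrow> (\<exists>g\<in>M. z' = g z)"
  using orb_eq_iff[OF M_id M_comp] M_inverse by blast

lemma orb_M_apply: "g \<in> M \<Longrightarrow> orb M (g x) = orb M x"
  using orb_M_eq_iff by metis

lemma orb_mem: "y \<in> orb M x \<Longrightarrow> orb M y = orb M x"
  using orb_M_eq_iff unfolding orb_def by blast

lemma indaff_orb:
  assumes "\<alpha> \<in> NA M"
  shows "indaff M \<alpha> (orb M x) = orb M (\<alpha> x)"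
proof -
  have "orb M x \<in> OrbSp M" unfolding OrbSp_def by blast
  then have "indaff M \<alpha> (orb M x) = orb M (\<alpha> (SOME y. y \<in> orb M x))" unfolding indaff_def by simp
  moreover have "(SOME y. y \<in> orb M x) \<in> orb M x" using orb_self by (metis someI)
  then obtain g where "g \<in> M" "(SOME y. y \<in> orb M x) = g x" unfolding orb_def by blast
  moreover have "orb M (\<alpha> (g x)) = orb M (\<alpha> x)" if "g \<in> M" for g
  proof -
    have "\<alpha> (g x) \<in> orb M (\<alpha> x)" unfolding orb_NA[OF assms] using that unfolding orb_def by blast
    then show ?thesis by (rule orb_mem)
  qed
  ultimately show ?thesis by simp
qed

lemma indaff_eqI:
  assumes "\<And>x. indaff M \<alpha> (orb M x) = indaff M \<beta> (orb M x)"
  shows "indaff M \<alpha> = indaff M \<beta>"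
proof
  fix Ob show "indaff M \<alpha> Ob = indaff M \<beta> Ob"
  proof (cases "Ob \<in> OrbSp M")
    case True
    then obtain x where "Ob = orb M x" unfolding OrbSp_def by blast
    then show ?thesis using assms by simp
  next
    case False
    then show ?thesis unfolding indaff_def by simp
  qed
qed

lemma indaff_M_comp:
  assumes "g \<in> M" "\<alpha> \<in> NA M"
  shows "indaff M (g \<circ> \<alpha>) = indaff M \<alpha>"
proof (rule indaff_eqI)
  have "g \<circ> \<alpha> \<in> NA M" using NA_comp M_NA assms by blast
  then show "indaff M (g \<circ> \<alpha>) (orb M x) = indaff M \<alpha> (orb M x)" for x
    using indaff_orb assms orb_M_apply by simp
qed

lemma uv: "u \<bullet> u = 1" "v \<bullet> v = 1" "u \<bullet> v = 0" "v \<bullet> u = 0" and s_pos: "s > 0"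
  using quotient_square unfolding quotient_is_square_def by (auto simp: norm_eq_1 inner_commute)

text \<open>\<open>\<Phi>\<close> maps the square \<open>[-s,s]\<^sup>2\<close> isometrically onto the square of the hypothesis; \<open>\<Theta>\<close>
  expresses this in the coordinates in which \<open>M\<close> is the standard pmm.\<close>

definition \<Phi> :: emap where "\<Phi> = affmap (u$1) (v$1) (u$2) (v$2) (c$1) (c$2)"

definition \<Theta> :: emap where "\<Theta> = \<phi>' \<circ> \<Phi>"

lemma Phi_apply: "\<Phi> z = c + z$1 *\<^sub>R u + z$2 *\<^sub>R v"
  unfolding \<Phi>_def by (simp add: vec2_eq_iff algebra_simps)

lemma Phi_affine: "affine_auto \<Phi>"
proof -
  have uv': "u$1 * u$1 + u$2 * u$2 = 1" "v$1 * v$1 + v$2 * v$2 = 1" "u$1 * v$1 + u$2 * v$2 = 0"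
    using uv by (simp_all add: inner_vec_def sum_2)
  have "(u$1 * v$2 - v$1 * u$2)^2 =
      (u$1 * u$1 + u$2 * u$2) * (v$1 * v$1 + v$2 * v$2) - (u$1 * v$1 + u$2 * v$2)^2"
    by (simp add: power2_eq_square algebra_simps)
  then have "u$1 * v$2 - v$1 * u$2 \<noteq> 0" using uv' by auto
  then show ?thesis unfolding affine_auto_affmap \<Phi>_def by blast
qed

lemma Phi_bij: "bij \<Phi>"
  using affine_auto_bij[OF Phi_affine] .

lemma dist_Phi: "dist (\<Phi> a) (\<Phi> b) = dist a b"
proof -
  have "\<Phi> a - \<Phi> b = (a$1 - b$1) *\<^sub>R u + (a$2 - b$2) *\<^sub>R v"
    unfolding Phi_apply by (simp add: algebra_simps)
  then have "(\<Phi> a - \<Phi> b) \<bullet> (\<Phi> a - \<Phi> b) = (a$1 - b$1)^2 + (a$2 - b$2)^2"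
    by (simp add: inner_add_left inner_add_right uv power2_eq_square)
  moreover have "dist (\<Phi> a) (\<Phi> b) = sqrt ((\<Phi> a - \<Phi> b) \<bullet> (\<Phi> a - \<Phi> b))"
    by (simp add: dist_norm norm_eq_sqrt_inner)
  ultimately show ?thesis using dist_vec2[of a b] by simp
qed

lemma square_eq: "square c u v s = \<Phi> ` closed_sq 0 0 s"
proof (intro equalityI subsetI)
  fix x assume "x \<in> square c u v s"
  then obtain a b where ab: "x = c + a *\<^sub>R u + b *\<^sub>R v" "\<bar>a\<bar> \<le> s" "\<bar>b\<bar> \<le> s"
    unfolding square_def by blast
  then have "x = \<Phi> (vector [a, b])" "vector [a, b] \<in> closed_sq 0 0 s"
    unfolding Phi_apply closed_sq_def by simp_all
  then show "x \<in> \<Phi> ` closed_sq 0 0 s" by blast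
qed (auto simp: square_def closed_sq_def Phi_apply)

lemma Theta_affine: "affine_auto \<Theta>"
  unfolding \<Theta>_def using affine_auto_comp[OF phi'_affine Phi_affine] .

lemma Theta_bij: "bij \<Theta>"
  using affine_auto_bij[OF Theta_affine] .

lemma Phi_eq: "\<Phi> y = \<phi> (\<Theta> y)"
  unfolding \<Theta>_def by simp

lemma conj_Phi: "conj \<Phi> G = conj \<phi> (conj \<Theta> G)"
proof -
  have "\<Phi> = \<phi> \<circ> \<Theta>" using Phi_eq by auto
  then show ?thesis using conj_conj[OF phi_bij Theta_bij] by simp
qed

lemma orb_M_phi: "orb M (\<phi> z) = \<phi> ` orb pmm_std z"
  unfolding M_eq using orb_conj_image[OF phi_bij] .

lemma orb_M_phi_eq_iff: "orb M (\<phi> z) = orb M (\<phi> z') \<longleftrightarrow> (\<exists>g\<in>pmm_std. z' = g z)"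
  unfolding orb_M_phi orb_pmm_std_eq_iff[symmetric] using phi_bij
  by (simp add: bij_is_inj inj_image_eq_iff)

lemma Phi_open_sq_interior: "\<Phi> ` open_sq s \<subseteq> interior (square c u v s)"
proof (rule interior_maximal)
  show "\<Phi> ` open_sq s \<subseteq> square c u v s" unfolding square_eq using open_sq_subset_closed_sq by blast
  obtain P Q R T B1 B2 where \<Phi>': "inv_into UNIV \<Phi> = affmap P Q R T B1 B2"
    using affine_auto_inv[OF Phi_affine] unfolding affine_auto_affmap by blast
  have i: "affmap P Q R T B1 B2 (\<Phi> x) = x" "\<Phi> (affmap P Q R T B1 B2 x) = x" for x
    unfolding \<Phi>'[symmetric] using Phi_bij by (simp_all add: bij_is_inj bij_is_surj inv_f_f surj_f_inv_f)
  have "\<Phi> ` open_sq s = {x. \<bar>affmap P Q R T B1 B2 x $ 1\<bar> < s \<and> \<bar>affmap P Q R T B1 B2 x $ 2\<bar> < s}"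
  proof (intro equalityI subsetI)
    fix x assume "x \<in> {x. \<bar>affmap P Q R T B1 B2 x $ 1\<bar> < s \<and> \<bar>affmap P Q R T B1 B2 x $ 2\<bar> < s}"
    then have "affmap P Q R T B1 B2 x \<in> open_sq s" unfolding open_sq_def by simp
    then show "x \<in> \<Phi> ` open_sq s" using i(2)[of x] by (metis image_eqI)
  qed (auto simp: open_sq_def i(1) simp del: affmap_nth)
  moreover have "open {x. \<bar>affmap P Q R T B1 B2 x $ 1\<bar> < s \<and> \<bar>affmap P Q R T B1 B2 x $ 2\<bar> < s}"
    by (intro open_Collect_conj open_Collect_less continuous_on_affmap_nth continuous_intros)
  ultimately show "open (\<Phi> ` open_sq s)" by simp
qed

text \<open>This is where the hypothesis that distinct interior points of the square lie in distinct orbits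
  is used.\<close>

lemma open_sq_pmm_std_inj:
  assumes "y \<in> open_sq s" "y' \<in> open_sq s" "g \<in> pmm_std" "g (\<Theta> y) = \<Theta> y'"
  shows "y = y'"
proof -
  have "orb M (\<Phi> y) = orb M (\<Phi> y')" unfolding Phi_eq orb_M_phi_eq_iff using assms(3,4) by metis
  moreover have "\<Phi> y \<in> interior (square c u v s)" "\<Phi> y' \<in> interior (square c u v s)"
    using Phi_open_sq_interior assms(1,2) by blast+
  ultimately have "\<Phi> y = \<Phi> y'" using quotient_square unfolding quotient_is_square_def by blast
  then show ?thesis using Phi_bij by (simp add: bij_is_inj inj_eq)
qed

text \<open>A point of \<open>\<Theta> ` open_sq s\<close> on a mirror line \<open>x\<^sub>i = m\<close> would be identified with its
  reflection.\<close>

lemma Theta_open_sq_not_Ints: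
  assumes y: "y \<in> open_sq s"
  shows "\<Theta> y $ 1 \<notin> \<int>" and "\<Theta> y $ 2 \<notin> \<int>"
proof -
  obtain p q r t b1 b2 where d: "p*t - q*r \<noteq> 0" and \<Theta>: "\<Theta> = affmap p q r t b1 b2"
    using Theta_affine unfolding affine_auto_affmap by blast
  note shift = affmap_add_preimage_basis[OF d, of b1 b2 y, folded \<Theta>]
  show "\<Theta> y $ 1 \<notin> \<int>"
  proof
    assume "\<Theta> y $ 1 \<in> \<int>"
    then obtain m where m: "\<Theta> y $ 1 = of_int m" by (metis Ints_cases)
    define w :: pt where "w = vector [t/(p*t - q*r), -r/(p*t - q*r)]"
    obtain \<tau> where \<tau>: "\<tau> > 0" "y + \<tau> *\<^sub>R w \<in> open_sq s" "y - \<tau> *\<^sub>R w \<in> open_sq s"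
      using open_sq_segment[OF y] by blast
    have "refl1 m (\<Theta> (y + \<tau> *\<^sub>R w)) = \<Theta> (y - \<tau> *\<^sub>R w)"
      unfolding w_def shift using m by (simp add: refl1_def vec2_eq_iff)
    then have "y + \<tau> *\<^sub>R w = y - \<tau> *\<^sub>R w" using open_sq_pmm_std_inj[OF \<tau>(2,3) refl1_pmm_std] by blast
    then have "w = 0" using \<tau>(1) by (simp add: vec2_eq_iff)
    then show False using d unfolding w_def by (simp add: vec2_eq_iff)
  qed
  show "\<Theta> y $ 2 \<notin> \<int>"
  proof
    assume "\<Theta> y $ 2 \<in> \<int>"
    then obtain m where m: "\<Theta> y $ 2 = of_int m" by (metis Ints_cases)
    define w :: pt where "w = vector [-q/(p*t - q*r), p/(p*t - q*r)]"
    obtain \<tau> where \<tau>: "\<tau> > 0" "y + \<tau> *\<^sub>R w \<in> open_sq s" "y - \<tau> *\<^sub>R w \<in> open_sq s"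
      using open_sq_segment[OF y] by blast
    have "refl2 m (\<Theta> (y + \<tau> *\<^sub>R w)) = \<Theta> (y - \<tau> *\<^sub>R w)"
      unfolding w_def shift using m by (simp add: refl2_def vec2_eq_iff)
    then have "y + \<tau> *\<^sub>R w = y - \<tau> *\<^sub>R w" using open_sq_pmm_std_inj[OF \<tau>(2,3) refl2_pmm_std] by blast
    then have "w = 0" using \<tau>(1) by (simp add: vec2_eq_iff)
    then show False using d unfolding w_def by (simp add: vec2_eq_iff)
  qed
qed

definition k0 :: int where "k0 = \<lfloor>\<Theta> 0 $ 1\<rfloor>"
definition l0 :: int where "l0 = \<lfloor>\<Theta> 0 $ 2\<rfloor>"
definition cell :: "pt set" where "cell = closed_sq (of_int k0 + 1/2) (of_int l0 + 1/2) (1/2)"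

lemma Theta_closed_sq_cell:
  assumes y: "y \<in> closed_sq 0 0 s"
  shows "\<Theta> y \<in> cell"
proof -
  obtain p q r t b1 b2 where \<Theta>: "\<Theta> = affmap p q r t b1 b2"
    using Theta_affine unfolding affine_auto_affmap by blast
  have lin: "\<Theta> (l *\<^sub>R y) $ 1 = l * \<Theta> y $ 1 + (1 - l) * \<Theta> 0 $ 1"
    "\<Theta> (l *\<^sub>R y) $ 2 = l * \<Theta> y $ 2 + (1 - l) * \<Theta> 0 $ 2" for l
    unfolding \<Theta> by (simp_all add: algebra_simps)
  have scaled: "l *\<^sub>R y \<in> open_sq s" if "0 < l" "l < 1" for l
  proof -
    have "\<bar>l * y$i\<bar> < s" if "\<bar>y$i\<bar> \<le> s" for i
    proof -
      have "\<bar>l * y$i\<bar> = l * \<bar>y$i\<bar>" using \<open>0 < l\<close> by (simp add: abs_mult)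
      also have "\<dots> \<le> l * s" using that \<open>0 < l\<close> by (simp add: mult_left_mono)
      also have "\<dots> < s" using \<open>l < 1\<close> s_pos by simp
      finally show ?thesis .
    qed
    then show ?thesis using y unfolding open_sq_def closed_sq_def by simp
  qed
  have "0 \<in> open_sq s" unfolding open_sq_def using s_pos by simp
  note centre = floor_less_not_Ints[OF Theta_open_sq_not_Ints(1)[OF this]]
    floor_less_not_Ints[OF Theta_open_sq_not_Ints(2)[OF this]]
  have "of_int k0 \<le> \<Theta> y $ 1 \<and> \<Theta> y $ 1 \<le> of_int k0 + 1"
  proof (rule segment_avoiding_int)
    show "l * \<Theta> y $ 1 + (1 - l) * \<Theta> 0 $ 1 \<notin> \<int>" if "0 < l" "l < 1" for l
      using Theta_open_sq_not_Ints(1)[OF scaled[OF that]] lin by simp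
  qed (use centre in \<open>simp_all add: k0_def\<close>)
  moreover have "of_int l0 \<le> \<Theta> y $ 2 \<and> \<Theta> y $ 2 \<le> of_int l0 + 1"
  proof (rule segment_avoiding_int)
    show "l * \<Theta> y $ 2 + (1 - l) * \<Theta> 0 $ 2 \<notin> \<int>" if "0 < l" "l < 1" for l
      using Theta_open_sq_not_Ints(2)[OF scaled[OF that]] lin by simp
  qed (use centre in \<open>simp_all add: l0_def\<close>)
  ultimately show ?thesis unfolding cell_def closed_sq_def closed_sq_unit_cell_iff by simp
qed

lemma Theta_closed_sq: "\<Theta> ` closed_sq 0 0 s = cell"
proof
  show "\<Theta> ` closed_sq 0 0 s \<subseteq> cell" using Theta_closed_sq_cell by blast
  show "cell \<subseteq> \<Theta> ` closed_sq 0 0 s"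
  proof
    fix w assume w: "w \<in> cell"
    have "orb M (\<phi> w) \<in> orb M ` square c u v s"
      using quotient_square unfolding quotient_is_square_def OrbSp_def by blast
    then obtain y where y: "y \<in> closed_sq 0 0 s" "orb M (\<phi> (\<Theta> y)) = orb M (\<phi> w)"
      unfolding square_eq Phi_eq by auto
    then obtain g where g: "g \<in> pmm_std" "\<Theta> y = g w" using orb_M_phi_eq_iff by metis
    have "g w = w" using pmm_std_unit_cell[OF g(1)] w Theta_closed_sq_cell[OF y(1)] g(2)
      unfolding cell_def by simp
    then show "w \<in> \<Theta> ` closed_sq 0 0 s" using g(2) y(1) by (metis image_eqI)
  qed
qed

definition \<kappa> :: real where "\<kappa> = 1 / (2 * s)"

lemma Theta_form:
  obtains e1 e2 where "e1 \<in> {1,-1}" "e2 \<in> {1,-1}"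
    "\<Theta> = affmap (\<kappa> * of_int e1) 0 0 (\<kappa> * of_int e2) (of_int k0 + 1/2) (of_int l0 + 1/2) \<or>
     \<Theta> = affmap 0 (\<kappa> * of_int e1) (\<kappa> * of_int e2) 0 (of_int k0 + 1/2) (of_int l0 + 1/2)"
proof -
  obtain p q r t b1 b2 where d: "p*t - q*r \<noteq> 0" and \<Theta>: "\<Theta> = affmap p q r t b1 b2"
    using Theta_affine unfolding affine_auto_affmap by blast
  have img: "affmap p q r t b1 b2 ` closed_sq 0 0 s = closed_sq (of_int k0 + 1/2) (of_int l0 + 1/2) (1/2)"
    using Theta_closed_sq \<Theta> cell_def by simp
  have "(1/2) / s = \<kappa>" unfolding \<kappa>_def by simp
  then have C: "affmap p q r t b1 b2 (vector [0, 0]) = vector [of_int k0 + 1/2, of_int l0 + 1/2]"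
    "(q = 0 \<and> r = 0 \<and> \<bar>p\<bar> = \<kappa> \<and> \<bar>t\<bar> = \<kappa>) \<or> (p = 0 \<and> t = 0 \<and> \<bar>q\<bar> = \<kappa> \<and> \<bar>r\<bar> = \<kappa>)"
    using affmap_closed_sq_onto[OF d s_pos _ img] by simp_all
  have b: "b1 = of_int k0 + 1/2" "b2 = of_int l0 + 1/2" using C(1) by (simp_all add: vec2_eq_iff)
  note sgn = abs_eq_times_sign[of _ \<kappa>]
  from C(2) show thesis
  proof
    assume h: "q = 0 \<and> r = 0 \<and> \<bar>p\<bar> = \<kappa> \<and> \<bar>t\<bar> = \<kappa>"
    then obtain e1 e2 where e: "e1 \<in> {1,-1}" "e2 \<in> {1,-1}" "p = \<kappa> * of_int e1" "t = \<kappa> * of_int e2"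
      using sgn by metis
    have "\<Theta> = affmap (\<kappa> * of_int e1) 0 0 (\<kappa> * of_int e2) (of_int k0 + 1/2) (of_int l0 + 1/2)"
      unfolding \<Theta> b e(3,4) using h by simp
    then show thesis using that e(1,2) by blast
  next
    assume h: "p = 0 \<and> t = 0 \<and> \<bar>q\<bar> = \<kappa> \<and> \<bar>r\<bar> = \<kappa>"
    then obtain e1 e2 where e: "e1 \<in> {1,-1}" "e2 \<in> {1,-1}" "q = \<kappa> * of_int e1" "r = \<kappa> * of_int e2"
      using sgn by metis
    have "\<Theta> = affmap 0 (\<kappa> * of_int e1) (\<kappa> * of_int e2) 0 (of_int k0 + 1/2) (of_int l0 + 1/2)"
      unfolding \<Theta> b e(3,4) using h by simp
    then show thesis using that e(1,2) by blast
  qed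
qed


subsection \<open>The symmetries of the square\<close>

lemma refl_line_mid_eq: "refl_line c v = conj \<Phi> coord_flip"
proof -
  have "(\<Phi> z - c) \<bullet> v = z$2" for z unfolding Phi_apply by (simp add: inner_add_left uv)
  then have "refl_line c v (\<Phi> z) = \<Phi> (coord_flip z)" for z
    unfolding refl_line_def Phi_apply coord_flip_def by (simp add: vec2_eq_iff algebra_simps)
  then have "\<Phi> \<circ> coord_flip = refl_line c v \<circ> \<Phi>" by auto
  then show ?thesis using conj_eq_iff[OF Phi_bij] by metis
qed

lemma refl_line_diag_eq: "refl_line c ((1 / sqrt 2) *\<^sub>R (u + v)) = conj \<Phi> coord_swap"
proof -
  let ?w = "(1 / sqrt 2) *\<^sub>R (u + v)"
  have key: "(2 * ((\<Phi> z - c) \<bullet> ?w)) *\<^sub>R ?w = (z$1 + z$2) *\<^sub>R (u + v)" for z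
  proof -
    have "(\<Phi> z - c) \<bullet> ?w = (z$1 + z$2) / sqrt 2" unfolding Phi_apply
      by (simp add: inner_add_left inner_add_right uv algebra_simps add_divide_distrib)
    moreover have "2 * (x / sqrt 2) * (1 / sqrt 2) = x" for x :: real
      by (simp add: field_simps)
    ultimately show ?thesis by (simp only: scaleR_scaleR)
  qed
  have "refl_line c ?w (\<Phi> z) = \<Phi> (coord_swap z)" for z
  proof -
    have "refl_line c ?w (\<Phi> z) = c + (z$1 + z$2) *\<^sub>R (u + v) - (z$1 *\<^sub>R u + z$2 *\<^sub>R v)"
      unfolding refl_line_def key by (simp add: Phi_apply)
    moreover have "\<Phi> (coord_swap z) = c + z$2 *\<^sub>R u + z$1 *\<^sub>R v"
      unfolding Phi_apply coord_swap_def by simp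
    ultimately show ?thesis by (simp add: vec2_eq_iff algebra_simps)
  qed
  then have "\<Phi> \<circ> coord_swap = refl_line c ?w \<circ> \<Phi>" by auto
  then show ?thesis using conj_eq_iff[OF Phi_bij] by metis
qed

text \<open>In the pmm coordinates the centre of the square is the centre of a unit cell, so the symmetries
  of the square become lattice isometries.\<close>

lemma Theta_zero: "\<Theta> 0 = vector [of_int k0 + 1/2, of_int l0 + 1/2]"
  by (rule Theta_form) (auto simp: vec2_eq_iff)

lemma lattice_isometry_conj_Theta_coord_flip: "lattice_isometry (conj \<Theta> coord_flip)"
proof -
  obtain e1 e2 where e: "\<Theta> = affmap (\<kappa> * of_int e1) 0 0 (\<kappa> * of_int e2) (of_int k0 + 1/2) (of_int l0 + 1/2) \<or>
    \<Theta> = affmap 0 (\<kappa> * of_int e1) (\<kappa> * of_int e2) 0 (of_int k0 + 1/2) (of_int l0 + 1/2)"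
    by (rule Theta_form)
  define X1 where "X1 = affmap (of_int (-1)) (of_int 0) (of_int 0) (of_int 1) (of_int (2*k0+1)) (of_int 0)"
  define X2 where "X2 = affmap (of_int 1) (of_int 0) (of_int 0) (of_int (-1)) (of_int 0) (of_int (2*l0+1))"
  have "lattice_isometry X1" "lattice_isometry X2"
    unfolding X1_def X2_def lattice_isometry_def signed_perm_def by blast+
  moreover have "\<Theta> \<circ> coord_flip = X1 \<circ> \<Theta> \<or> \<Theta> \<circ> coord_flip = X2 \<circ> \<Theta>"
    using e unfolding X1_def X2_def coord_flip_def by (elim disjE) (simp_all add: affmap_comp affmap_eq_iff)
  ultimately show ?thesis using conj_eq_iff[OF Theta_bij] by metis
qed

lemma lattice_isometry_conj_Theta_coord_swap: "lattice_isometry (conj \<Theta> coord_swap)"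
proof -
  obtain e1 e2 where e: "e1 \<in> {1,-1}" "e2 \<in> {1,-1}"
    "\<Theta> = affmap (\<kappa> * of_int e1) 0 0 (\<kappa> * of_int e2) (of_int k0 + 1/2) (of_int l0 + 1/2) \<or>
     \<Theta> = affmap 0 (\<kappa> * of_int e1) (\<kappa> * of_int e2) 0 (of_int k0 + 1/2) (of_int l0 + 1/2)"
    by (rule Theta_form)
  define e where "e = e1 * e2"
  define b1 where "b1 = (if e = 1 then k0 - l0 else k0 + l0 + 1)"
  define b2 where "b2 = (if e = 1 then l0 - k0 else k0 + l0 + 1)"
  define sw where "sw = affmap (of_int 0) (of_int e) (of_int e) (of_int 0) (of_int b1) (of_int b2)"
  have "e \<in> {1,-1}" unfolding e_def using e(1,2) by auto
  then have "lattice_isometry sw" unfolding sw_def lattice_isometry_def signed_perm_def by blast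
  moreover have "\<Theta> \<circ> coord_swap = sw \<circ> \<Theta>"
    using e unfolding sw_def coord_swap_def b1_def b2_def e_def
    by (elim disjE) (auto simp: affmap_comp affmap_eq_iff algebra_simps)
  ultimately show ?thesis using conj_eq_iff[OF Theta_bij] by metis
qed

lemma lattice_isometry_conj_Theta_D4:
  assumes "G \<in> D4"
  shows "lattice_isometry (conj \<Theta> G)"
proof -
  have "conj \<Theta> (a \<circ> b) = conj \<Theta> a \<circ> conj \<Theta> b" for a b using conj_comp[OF Theta_bij] .
  then show ?thesis
    using assms lattice_isometry_conj_Theta_coord_flip lattice_isometry_conj_Theta_coord_swap
      lattice_isometry_id conj_id_right[OF Theta_bij]
    unfolding D4_eq by (auto intro!: lattice_isometry_comp)
qed

lemma conj_Phi_NA: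
  assumes "G \<in> D4"
  shows "conj \<Phi> G \<in> NA M"
proof -
  have "conj \<Theta> G \<in> NA pmm_std"
    using lattice_isometry_NA_pmm_std[OF lattice_isometry_conj_Theta_D4[OF assms]] .
  then show ?thesis unfolding NA_M conj_Phi by (rule imageI)
qed

lemma lattice_isometry_fixing_centre:
  assumes \<psi>: "lattice_isometry \<psi>" and fixed: "\<psi> (\<Theta> 0) = \<Theta> 0"
  obtains G where "G \<in> D4" "conj \<Theta> G = \<psi>"
proof -
  obtain Q11 Q12 Q21 Q22 b1 b2 :: int where Q: "signed_perm Q11 Q12 Q21 Q22"
    and \<psi>': "\<psi> = affmap (of_int Q11) (of_int Q12) (of_int Q21) (of_int Q22) (of_int b1) (of_int b2)"
    using \<psi> unfolding lattice_isometry_def by blast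
  have c: "of_int Q11 * (of_int k0 + 1/2) + of_int Q12 * (of_int l0 + 1/2) + of_int b1 = of_int k0 + (1/2::real)"
    "of_int Q21 * (of_int k0 + 1/2) + of_int Q22 * (of_int l0 + 1/2) + of_int b2 = of_int l0 + (1/2::real)"
    using fixed unfolding Theta_zero \<psi>' by (simp_all add: vec2_eq_iff)
  obtain e1 e2 where e: "e1 \<in> {1,-1}" "e2 \<in> {1,-1}"
   "\<Theta> = affmap (\<kappa> * of_int e1) 0 0 (\<kappa> * of_int e2) (of_int k0 + 1/2) (of_int l0 + 1/2) \<or>
    \<Theta> = affmap 0 (\<kappa> * of_int e1) (\<kappa> * of_int e2) 0 (of_int k0 + 1/2) (of_int l0 + 1/2)"
    by (rule Theta_form)
  have q: "e1 = 1 \<or> e1 = -1" "e2 = 1 \<or> e2 = -1" using e(1,2) by auto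
  have sp: "signed_perm Q11 (e1*e2*Q12) (e1*e2*Q21) Q22" "signed_perm Q22 (e1*e2*Q21) (e1*e2*Q12) Q11"
    using Q q unfolding signed_perm_def by auto
  from e(3) show thesis
  proof
    assume T: "\<Theta> = affmap (\<kappa> * of_int e1) 0 0 (\<kappa> * of_int e2) (of_int k0 + 1/2) (of_int l0 + 1/2)"
    define G where "G = affmap (of_int Q11) (of_int (e1*e2*Q12)) (of_int (e1*e2*Q21)) (of_int Q22) 0 0"
    have "\<Theta> \<circ> G = \<psi> \<circ> \<Theta>"
      unfolding T G_def \<psi>' affmap_comp affmap_eq_iff using q c by (elim disjE) (simp_all add: algebra_simps)
    moreover have "G \<in> D4" unfolding G_def D4_def using sp(1) by blast
    ultimately show thesis using that conj_eq_iff[OF Theta_bij] by blast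
  next
    assume T: "\<Theta> = affmap 0 (\<kappa> * of_int e1) (\<kappa> * of_int e2) 0 (of_int k0 + 1/2) (of_int l0 + 1/2)"
    define G where "G = affmap (of_int Q22) (of_int (e1*e2*Q21)) (of_int (e1*e2*Q12)) (of_int Q11) 0 0"
    have "\<Theta> \<circ> G = \<psi> \<circ> \<Theta>"
      unfolding T G_def \<psi>' affmap_comp affmap_eq_iff using q c by (elim disjE) (simp_all add: algebra_simps)
    moreover have "G \<in> D4" unfolding G_def D4_def using sp(2) by blast
    ultimately show thesis using that conj_eq_iff[OF Theta_bij] by blast
  qed
qed

text \<open>Every element of the normalizer is, modulo \<open>M\<close>, a symmetry of the square: in pmm coordinates
  it maps the centre of the cell to another centre of a cell, which an element of pmm moves back.\<close>

lemma NA_M_decomp: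
  assumes "\<alpha> \<in> NA M"
  obtains g G where "g \<in> M" "G \<in> D4" "\<alpha> = g \<circ> conj \<Phi> G"
proof -
  obtain \<psi> where \<psi>: "lattice_isometry \<psi>" "\<alpha> = conj \<phi> \<psi>"
    using assms NA_pmm_std_lattice_isometry unfolding NA_M by blast
  obtain j j' where j: "\<psi> (\<Theta> 0) = vector [of_int j + 1/2, of_int j' + 1/2]"
    unfolding Theta_zero using lattice_isometry_half_int_point[OF \<psi>(1)] by blast
  obtain p where p: "p \<in> pmm_std"
    "p (vector [of_int j + 1/2, of_int j' + 1/2]) = vector [of_int k0 + 1/2, of_int l0 + 1/2]"
    by (rule pmm_std_moves_half_int_point)
  have "(p \<circ> \<psi>) (\<Theta> 0) = \<Theta> 0" using p(2) j unfolding Theta_zero by simp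
  then obtain G where G: "G \<in> D4" "conj \<Theta> G = p \<circ> \<psi>"
    by (rule lattice_isometry_fixing_centre[OF lattice_isometry_comp[OF pmm_std_lattice_isometry[OF p(1)] \<psi>(1)]])
  obtain p' where p': "p' \<in> pmm_std" "p' \<circ> p = id" using pmm_std_inverse[OF p(1)] by blast
  have "\<psi> = p' \<circ> conj \<Theta> G" unfolding G(2) using p'(2) by (simp add: o_assoc)
  then have "\<alpha> = conj \<phi> (p' \<circ> conj \<Theta> G)" using \<psi>(2) by simp
  also have "\<dots> = conj \<phi> p' \<circ> conj \<Phi> G" unfolding conj_Phi conj_comp[OF phi_bij] ..
  finally have "\<alpha> = conj \<phi> p' \<circ> conj \<Phi> G" .
  moreover have "conj \<phi> p' \<in> M" unfolding M_eq using p'(1) by blast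
  ultimately show thesis using that G(1) by blast
qed

lemma Aff_eq: "Aff M = (\<lambda>G. indaff M (conj \<Phi> G)) ` D4"
proof
  show "Aff M \<subseteq> (\<lambda>G. indaff M (conj \<Phi> G)) ` D4"
  proof
    fix F assume "F \<in> Aff M"
    then obtain \<alpha> where \<alpha>: "\<alpha> \<in> NA M" "F = indaff M \<alpha>" unfolding Aff_def by blast
    obtain g G where "g \<in> M" "G \<in> D4" "\<alpha> = g \<circ> conj \<Phi> G" using \<alpha>(1) by (rule NA_M_decomp)
    then show "F \<in> (\<lambda>G. indaff M (conj \<Phi> G)) ` D4" using \<alpha>(2) indaff_M_comp conj_Phi_NA by simp
  qed
  show "(\<lambda>G. indaff M (conj \<Phi> G)) ` D4 \<subseteq> Aff M" unfolding Aff_def using conj_Phi_NA by blast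
qed

lemma indaff_conj_Phi_inj:
  assumes G: "G1 \<in> D4" "G2 \<in> D4" and e: "indaff M (conj \<Phi> G1) = indaff M (conj \<Phi> G2)"
  shows "G1 = G2"
proof -
  have pt: "G1 y = G2 y" if y: "y \<in> open_sq s" for y
  proof -
    have "orb M (\<Phi> (G1 y)) = orb M (\<Phi> (G2 y))"
      using e indaff_orb[OF conj_Phi_NA[OF G(1)], of "\<Phi> y"] indaff_orb[OF conj_Phi_NA[OF G(2)], of "\<Phi> y"]
      by (simp add: conj_apply[OF Phi_bij])
    then have "orb M (\<phi> (\<Theta> (G1 y))) = orb M (\<phi> (\<Theta> (G2 y)))" by (simp add: Phi_eq)
    then obtain g where "g \<in> pmm_std" "g (\<Theta> (G1 y)) = \<Theta> (G2 y)" using orb_M_phi_eq_iff by metis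
    then show ?thesis using open_sq_pmm_std_inj D4_open_sq G y by metis
  qed
  have y: "vector [s/2, 0] \<in> open_sq s" "vector [0, s/2] \<in> open_sq s"
    unfolding open_sq_def using s_pos by simp_all
  obtain a b c d where 1: "G1 = affmap (of_int a) (of_int b) (of_int c) (of_int d) 0 0"
    using G(1) unfolding D4_def by blast
  obtain a' b' c' d' where 2: "G2 = affmap (of_int a') (of_int b') (of_int c') (of_int d') 0 0"
    using G(2) unfolding D4_def by blast
  have "of_int a * (s/2) = of_int a' * (s/2)" "of_int c * (s/2) = of_int c' * (s/2)"
    "of_int b * (s/2) = of_int b' * (s/2)" "of_int d * (s/2) = of_int d' * (s/2)"
    using pt[OF y(1)] pt[OF y(2)] unfolding 1 2 by (simp_all add: vec2_eq_iff)
  then show ?thesis unfolding 1 2 using s_pos by simp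
qed

lemma card_Aff: "card (Aff M) = 8"
proof -
  have "inj_on (\<lambda>G. indaff M (conj \<Phi> G)) D4" using indaff_conj_Phi_inj by (auto simp: inj_on_def)
  then show ?thesis unfolding Aff_eq using card_image card_D4 by metis
qed

lemma qdist_indaff:
  assumes \<alpha>: "\<alpha> \<in> NA M" and iso: "\<And>x y. dist (\<alpha> x) (\<alpha> y) = dist x y"
  shows "qdist (indaff M \<alpha> (orb M x)) (indaff M \<alpha> (orb M y)) = qdist (orb M x) (orb M y)"
proof -
  have "{dist a b | a b. a \<in> \<alpha> ` orb M x \<and> b \<in> \<alpha> ` orb M y} = {dist a b | a b. a \<in> orb M x \<and> b \<in> orb M y}"
  proof (intro equalityI subsetI)
    fix z assume "z \<in> {dist a b | a b. a \<in> \<alpha> ` orb M x \<and> b \<in> \<alpha> ` orb M y}"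
    then obtain a b where "a \<in> orb M x" "b \<in> orb M y" "z = dist (\<alpha> a) (\<alpha> b)" by blast
    then show "z \<in> {dist a b | a b. a \<in> orb M x \<and> b \<in> orb M y}" using iso by auto
  next
    fix z assume "z \<in> {dist a b | a b. a \<in> orb M x \<and> b \<in> orb M y}"
    then obtain a b where ab: "a \<in> orb M x" "b \<in> orb M y" "z = dist a b" by blast
    then have "z = dist (\<alpha> a) (\<alpha> b)" using iso by simp
    then show "z \<in> {dist a b | a b. a \<in> \<alpha> ` orb M x \<and> b \<in> \<alpha> ` orb M y}" using ab by blast
  qed
  then show ?thesis unfolding qdist_def indaff_orb[OF \<alpha>] orb_NA[OF \<alpha>] by simp
qed

lemma Sym_eq_Aff: "Sym M = Aff M"
proof
  show "Sym M \<subseteq> Aff M" unfolding Sym_def by blast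
  show "Aff M \<subseteq> Sym M"
  proof
    fix F assume F: "F \<in> Aff M"
    then obtain G where G: "G \<in> D4" "F = indaff M (conj \<Phi> G)" unfolding Aff_eq by blast
    have "dist (conj \<Phi> G x) (conj \<Phi> G y) = dist x y" for x y
    proof -
      obtain a b where "x = \<Phi> a" "y = \<Phi> b" using Phi_bij by (metis bij_pointE)
      then show ?thesis using conj_apply[OF Phi_bij] dist_Phi D4_isometry[OF G(1)] by simp
    qed
    then have "qdist (F Ob) (F Ob2) = qdist Ob Ob2" if "Ob \<in> OrbSp M" "Ob2 \<in> OrbSp M" for Ob Ob2
      using that qdist_indaff[OF conj_Phi_NA[OF G(1)]] unfolding G(2) OrbSp_def by blast
    then show "F \<in> Sym M" unfolding Sym_def using F by blast
  qed
qed


lemma indaff_id: "indaff M id = (\<lambda>Ob\<in>OrbSp M. Ob)"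
proof
  fix Ob show "indaff M id Ob = (\<lambda>Ob\<in>OrbSp M. Ob) Ob"
  proof (cases "Ob \<in> OrbSp M")
    case True
    then obtain x where "Ob = orb M x" unfolding OrbSp_def by blast
    then show ?thesis using indaff_orb[OF id_NA] True by simp
  next
    case False
    then show ?thesis unfolding indaff_def by simp
  qed
qed

lemma indaff_comp:
  assumes "\<alpha> \<in> NA M" "\<beta> \<in> NA M"
  shows "indaff M (\<alpha> \<circ> \<beta>) = (\<lambda>Ob\<in>OrbSp M. indaff M \<alpha> (indaff M \<beta> Ob))"
proof
  fix Ob show "indaff M (\<alpha> \<circ> \<beta>) Ob = (\<lambda>Ob\<in>OrbSp M. indaff M \<alpha> (indaff M \<beta> Ob)) Ob"
  proof (cases "Ob \<in> OrbSp M")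
    case True
    then obtain x where "Ob = orb M x" unfolding OrbSp_def by blast
    then show ?thesis
      using indaff_orb[OF NA_comp[OF assms]] indaff_orb[OF assms(1)] indaff_orb[OF assms(2)] True by simp
  next
    case False
    then show ?thesis unfolding indaff_def by simp
  qed
qed

lemma AffG_simps:
  "carrier (AffG M) = Aff M"
  "mult (AffG M) = (\<lambda>F G. \<lambda>Ob\<in>OrbSp M. F (G Ob))"
  "one (AffG M) = indaff M id"
  unfolding AffG_def indaff_id by simp_all

lemma AffG_mult_indaff:
  "\<alpha> \<in> NA M \<Longrightarrow> \<beta> \<in> NA M \<Longrightarrow> indaff M \<alpha> \<otimes>\<^bsub>AffG M\<^esub> indaff M \<beta> = indaff M (\<alpha> \<circ> \<beta>)"
  unfolding AffG_simps indaff_comp by simp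

lemma AffG_carrierE:
  assumes "F \<in> carrier (AffG M)"
  obtains \<alpha> where "\<alpha> \<in> NA M" "F = indaff M \<alpha>"
  using assms unfolding AffG_simps Aff_def by blast

lemma indaff_AffG: "\<alpha> \<in> NA M \<Longrightarrow> indaff M \<alpha> \<in> carrier (AffG M)"
  unfolding AffG_simps Aff_def by blast

lemma group_AffG: "group (AffG M)"
proof (rule groupI)
  fix x y z assume x: "x \<in> carrier (AffG M)" and y: "y \<in> carrier (AffG M)" and z: "z \<in> carrier (AffG M)"
  obtain \<alpha> where "\<alpha> \<in> NA M" "x = indaff M \<alpha>" using x by (rule AffG_carrierE)
  moreover obtain \<beta> where "\<beta> \<in> NA M" "y = indaff M \<beta>" using y by (rule AffG_carrierE)
  moreover obtain \<gamma> where "\<gamma> \<in> NA M" "z = indaff M \<gamma>" using z by (rule AffG_carrierE)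
  ultimately show "x \<otimes>\<^bsub>AffG M\<^esub> y \<in> carrier (AffG M)"
    and "x \<otimes>\<^bsub>AffG M\<^esub> y \<otimes>\<^bsub>AffG M\<^esub> z = x \<otimes>\<^bsub>AffG M\<^esub> (y \<otimes>\<^bsub>AffG M\<^esub> z)"
    by (simp_all add: AffG_mult_indaff NA_comp indaff_AffG o_assoc)
next
  show "\<one>\<^bsub>AffG M\<^esub> \<in> carrier (AffG M)" unfolding AffG_simps(3) using indaff_AffG[OF id_NA] .
next
  fix x assume "x \<in> carrier (AffG M)"
  then obtain \<alpha> where \<alpha>: "\<alpha> \<in> NA M" "x = indaff M \<alpha>" by (rule AffG_carrierE)
  show "\<one>\<^bsub>AffG M\<^esub> \<otimes>\<^bsub>AffG M\<^esub> x = x"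
    unfolding \<alpha>(2) AffG_simps(3) AffG_mult_indaff[OF id_NA \<alpha>(1)] by simp
  have "inv_into UNIV \<alpha> \<circ> \<alpha> = id"
    using \<alpha>(1) affine_auto_bij unfolding NA_def by (simp add: bij_is_inj)
  then have "indaff M (inv_into UNIV \<alpha>) \<otimes>\<^bsub>AffG M\<^esub> x = \<one>\<^bsub>AffG M\<^esub>"
    unfolding \<alpha>(2) AffG_mult_indaff[OF NA_inv[OF \<alpha>(1)] \<alpha>(1)] AffG_simps(3) by simp
  then show "\<exists>y\<in>carrier (AffG M). y \<otimes>\<^bsub>AffG M\<^esub> x = \<one>\<^bsub>AffG M\<^esub>"
    using indaff_AffG[OF NA_inv[OF \<alpha>(1)]] by blast
qed

abbreviation "m_refl \<equiv> refl_line c v"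
abbreviation "d_refl \<equiv> refl_line c ((1 / sqrt 2) *\<^sub>R (u + v))"

lemma refl_lines_NA: "m_refl \<in> NA M" "d_refl \<in> NA M"
proof -
  have "coord_flip \<in> D4" "coord_swap \<in> D4" unfolding D4_eq by simp_all
  then show "m_refl \<in> NA M" "d_refl \<in> NA M"
    unfolding refl_line_mid_eq refl_line_diag_eq by (simp_all add: conj_Phi_NA)
qed

lemma conj_Phi_D4_eq:
  "(\<lambda>G. conj \<Phi> G) ` D4 = {id, m_refl, d_refl, m_refl \<circ> d_refl, d_refl \<circ> m_refl,
     m_refl \<circ> d_refl \<circ> m_refl, d_refl \<circ> m_refl \<circ> d_refl, m_refl \<circ> d_refl \<circ> m_refl \<circ> d_refl}"
  unfolding D4_eq refl_line_mid_eq refl_line_diag_eq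
  using conj_id_right[OF Phi_bij] conj_comp[OF Phi_bij] by simp

lemma generate_AffG_refl_lines: "generate (AffG M) {indaff M m_refl, indaff M d_refl} = Aff M"
proof
  let ?g = "generate (AffG M) {indaff M m_refl, indaff M d_refl}"
  have "{indaff M m_refl, indaff M d_refl} \<subseteq> carrier (AffG M)"
    using indaff_AffG refl_lines_NA by blast
  then show "?g \<subseteq> Aff M"
    using group.generate_in_carrier[OF group_AffG] unfolding AffG_simps by blast
  have step: "indaff M (a \<circ> b) \<in> ?g"
    if "a \<in> NA M" "b \<in> NA M" "indaff M a \<in> ?g" "indaff M b \<in> ?g" for a b
    using generate.eng[OF that(3,4)] AffG_mult_indaff[OF that(1,2)] by simp
  have gens: "indaff M m_refl \<in> ?g" "indaff M d_refl \<in> ?g" "indaff M id \<in> ?g"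
    using generate.one[of "AffG M"] AffG_simps(3) by (simp_all add: generate.incl)
  show "Aff M \<subseteq> ?g" unfolding Aff_eq
  proof
    fix F assume "F \<in> (\<lambda>G. indaff M (conj \<Phi> G)) ` D4"
    then have "F \<in> indaff M ` (\<lambda>G. conj \<Phi> G) ` D4" by (simp add: image_image)
    then show "F \<in> ?g"
      unfolding conj_Phi_D4_eq using gens by (auto intro!: step refl_lines_NA NA_comp)
  qed
qed


subsection \<open>Outer automorphisms\<close>

abbreviation "GM \<equiv> map_group M"
abbreviation "AutM \<equiv> AutoGroup GM"

definition conj_aut :: "emap \<Rightarrow> emap \<Rightarrow> emap" where "conj_aut \<alpha> = (\<lambda>g\<in>M. conj \<alpha> g)"

lemma GM_simps [simp]: "carrier GM = M" "mult GM = (\<circ>)" "one GM = id"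
  unfolding map_group_def by simp_all

lemma group_GM: "group GM"
proof (rule groupI)
  show "\<exists>y\<in>carrier GM. y \<otimes>\<^bsub>GM\<^esub> x = \<one>\<^bsub>GM\<^esub>" if "x \<in> carrier GM" for x
    using M_inverse that by auto
qed (auto simp: M_comp M_id o_assoc)

lemma inv_GM:
  assumes "g \<in> M"
  shows "inv\<^bsub>GM\<^esub> g = inv_into UNIV g" "inv_into UNIV g \<in> M"
proof -
  obtain g' where g': "g' \<in> M" "g \<circ> g' = id" "g' \<circ> g = id" using M_inverse[OF assms] by blast
  have "inv_into UNIV g = g'" using g'(2,3) inv_unique_comp by blast
  moreover have "inv\<^bsub>GM\<^esub> g = g'" using group.inv_equality[OF group_GM, of g' g] g' assms by simp
  ultimately show "inv\<^bsub>GM\<^esub> g = inv_into UNIV g" "inv_into UNIV g \<in> M" using g'(1) by simp_all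
qed

lemma inn_eq: "inn GM = conj_aut ` M"
proof -
  have "(\<lambda>x\<in>M. a \<circ> x \<circ> inv\<^bsub>GM\<^esub> a) = conj_aut a" if "a \<in> M" for a
    unfolding conj_aut_def conj_def inv_GM(1)[OF that] by simp
  moreover have "inn GM = (\<lambda>a. \<lambda>x\<in>M. a \<circ> x \<circ> inv\<^bsub>GM\<^esub> a) ` M"
    unfolding inn_def GM_simps by (simp only: Setcompr_eq_image)
  ultimately show ?thesis by (simp cong: image_cong)
qed

lemma conj_aut_auto:
  assumes "\<alpha> \<in> NA M"
  shows "conj_aut \<alpha> \<in> auto GM"
proof -
  have b: "bij \<alpha>" using assms affine_auto_bij unfolding NA_def by blast
  have img: "conj \<alpha> ` M = M" using assms unfolding NA_def by blast
  have "conj_aut \<alpha> \<in> hom GM GM" unfolding hom_def conj_aut_def using img conj_comp[OF b] M_comp by auto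
  moreover have "inj_on (conj \<alpha>) M" using conj_inj[OF b] by (auto simp: inj_on_def)
  then have "conj_aut \<alpha> \<in> Bij M"
    unfolding Bij_def conj_aut_def bij_betw_def using img by (simp add: inj_on_def)
  ultimately show ?thesis unfolding auto_def GM_simps by blast
qed

lemma AutM_simps:
  "carrier AutM = auto GM" "one AutM = (\<lambda>x\<in>M. x)"
  "f \<in> auto GM \<Longrightarrow> g \<in> auto GM \<Longrightarrow> f \<otimes>\<^bsub>AutM\<^esub> g = compose M f g"
  unfolding AutoGroup_def BijGroup_def auto_def by simp_all

lemma group_AutM: "group AutM"
  using group.AutoGroup[OF group_GM] .

lemma conj_aut_carrier: "\<alpha> \<in> NA M \<Longrightarrow> conj_aut \<alpha> \<in> carrier AutM"
  unfolding AutM_simps by (rule conj_aut_auto)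

lemma conj_aut_mult:
  assumes "\<alpha> \<in> NA M" "\<beta> \<in> NA M"
  shows "conj_aut \<alpha> \<otimes>\<^bsub>AutM\<^esub> conj_aut \<beta> = conj_aut (\<alpha> \<circ> \<beta>)"
proof -
  have b: "bij \<alpha>" "bij \<beta>" using assms affine_auto_bij unfolding NA_def by blast+
  have "conj \<beta> x \<in> M" if "x \<in> M" for x using that assms(2) unfolding NA_def by blast
  then have "compose M (conj_aut \<alpha>) (conj_aut \<beta>) = conj_aut (\<alpha> \<circ> \<beta>)"
    unfolding compose_def conj_aut_def using conj_conj[OF b] by (auto simp: fun_eq_iff)
  then show ?thesis using AutM_simps(3) conj_aut_auto assms by simp
qed

lemma conj_aut_id: "conj_aut id = \<one>\<^bsub>AutM\<^esub>"
  unfolding conj_aut_def AutM_simps by (auto simp: restrict_def)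

lemma inv_conj_aut:
  assumes "\<alpha> \<in> NA M"
  shows "inv\<^bsub>AutM\<^esub> (conj_aut \<alpha>) = conj_aut (inv_into UNIV \<alpha>)"
proof (rule group.inv_equality[OF group_AutM])
  have "inv_into UNIV \<alpha> \<circ> \<alpha> = id" using assms affine_auto_bij unfolding NA_def by (simp add: bij_is_inj)
  then show "conj_aut (inv_into UNIV \<alpha>) \<otimes>\<^bsub>AutM\<^esub> conj_aut \<alpha> = \<one>\<^bsub>AutM\<^esub>"
    unfolding conj_aut_mult[OF NA_inv[OF assms] assms] by (simp add: conj_aut_id)
  show "conj_aut \<alpha> \<in> carrier AutM" using conj_aut_carrier[OF assms] .
  show "conj_aut (inv_into UNIV \<alpha>) \<in> carrier AutM" using conj_aut_carrier[OF NA_inv[OF assms]] .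
qed

lemma pmm_automorphism_conj_auto:
  assumes f: "f \<in> auto GM"
  shows "pmm_automorphism (\<lambda>p. conj \<phi>' (f (conj \<phi> p)))"
proof -
  have hom: "f (a \<circ> b) = f a \<circ> f b" if "a \<in> M" "b \<in> M" for a b
    using f that unfolding auto_def hom_def by simp
  have bb: "bij_betw f M M" using f unfolding auto_def Bij_def by simp
  have cM: "conj \<phi> p \<in> M" if "p \<in> pmm_std" for p using that M_eq by blast
  define f' where "f' = (\<lambda>p. conj \<phi>' (f (conj \<phi> p)))"
  have "pmm_automorphism f'"
  proof
    show "f' (a \<circ> b) = f' a \<circ> f' b" if "a \<in> pmm_std" "b \<in> pmm_std" for a b
      unfolding f'_def conj_comp[OF phi_bij] hom[OF cM[OF that(1)] cM[OF that(2)]] conj_comp[OF phi'_bij] ..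
    have "f' ` pmm_std = conj \<phi>' ` f ` conj \<phi> ` pmm_std" unfolding f'_def by (simp add: image_image)
    also have "\<dots> = pmm_std"
      unfolding M_eq[symmetric] bij_betw_imp_surj_on[OF bb] unfolding M_eq image_image \<phi>'_def
      using conj_inv_conj[OF phi_bij] by simp
    finally show "f' ` pmm_std = pmm_std" .
    show "inj_on f' pmm_std"
    proof (rule inj_onI)
      fix a b assume ab: "a \<in> pmm_std" "b \<in> pmm_std" "f' a = f' b"
      then have "f (conj \<phi> a) = f (conj \<phi> b)" unfolding f'_def using conj_inj[OF phi'_bij] by blast
      then have "conj \<phi> a = conj \<phi> b" using bij_betw_imp_inj_on[OF bb] cM ab(1,2) by (meson inj_onD)
      then show "a = b" using conj_inj[OF phi_bij] by blast
    qed
  qed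
  then show ?thesis unfolding f'_def .
qed

text \<open>Every automorphism of \<open>M\<close> is induced by the affine normalizer, since every automorphism of
  the standard pmm is.\<close>

lemma auto_GM_conj_aut:
  assumes f: "f \<in> auto GM"
  obtains \<alpha> where "\<alpha> \<in> NA M" "f = conj_aut \<alpha>"
proof -
  have ext: "f \<in> extensional M" using f unfolding auto_def Bij_def by simp
  define f' where "f' = (\<lambda>p. conj \<phi>' (f (conj \<phi> p)))"
  have "pmm_automorphism f'" unfolding f'_def using pmm_automorphism_conj_auto[OF f] .
  then obtain \<psi> where \<psi>: "lattice_isometry \<psi>" "\<forall>p\<in>pmm_std. f' p = conj \<psi> p"
    using pmm_automorphism_conj by blast
  have \<alpha>: "conj \<phi> \<psi> \<in> NA M" unfolding NA_M using lattice_isometry_NA_pmm_std[OF \<psi>(1)] by blast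
  have "f x = conj_aut (conj \<phi> \<psi>) x" for x
  proof (cases "x \<in> M")
    case True
    then obtain p where p: "p \<in> pmm_std" "x = conj \<phi> p" using M_eq by blast
    have "f x = conj \<phi> (f' p)" unfolding f'_def p(2) \<phi>'_def conj_conj_inv[OF phi_bij] ..
    also have "\<dots> = conj \<phi> (conj \<psi> p)" using \<psi>(2) p(1) by simp
    also have "\<dots> = conj (\<phi> \<circ> \<psi>) p" using conj_conj[OF phi_bij lattice_isometry_bij[OF \<psi>(1)]] .
    also have "\<phi> \<circ> \<psi> = conj \<phi> \<psi> \<circ> \<phi>" using conj_intertwines[OF phi_bij] .
    also have "conj (conj \<phi> \<psi> \<circ> \<phi>) p = conj (conj \<phi> \<psi>) x"
      unfolding p(2) using conj_conj[OF _ phi_bij] \<alpha> affine_auto_bij unfolding NA_def by auto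
    finally show ?thesis unfolding conj_aut_def using True by simp
  next
    case False
    then show ?thesis using ext unfolding conj_aut_def by (simp add: extensional_def)
  qed
  then show thesis using that \<alpha> by blast
qed

lemma inn_subgroup: "subgroup (inn GM) AutM"
proof (rule group.subgroupI[OF group_AutM])
  show "inn GM \<subseteq> carrier AutM" unfolding inn_eq using conj_aut_carrier M_NA by blast
  show "inn GM \<noteq> {}" unfolding inn_eq using M_id by blast
  show "inv\<^bsub>AutM\<^esub> a \<in> inn GM" if H: "a \<in> inn GM" for a
  proof -
    obtain g where g: "g \<in> M" "a = conj_aut g" using H unfolding inn_eq by blast
    show ?thesis unfolding g(2) inv_conj_aut[OF M_NA[OF g(1)]] inn_eq using inv_GM(2)[OF g(1)] by blast
  qed
  show "a \<otimes>\<^bsub>AutM\<^esub> b \<in> inn GM" if H: "a \<in> inn GM" "b \<in> inn GM" for a b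
  proof -
    obtain g h where g: "g \<in> M" "a = conj_aut g" "h \<in> M" "b = conj_aut h"
      using H unfolding inn_eq by blast
    show ?thesis unfolding g(2,4) conj_aut_mult[OF M_NA[OF g(1)] M_NA[OF g(3)]] inn_eq
      using M_comp g(1,3) by blast
  qed
qed

lemma inn_normal: "inn GM \<lhd> AutM"
  unfolding group.normal_inv_iff[OF group_AutM]
proof (intro conjI ballI)
  show "subgroup (inn GM) AutM" by (rule inn_subgroup)
  fix x h assume x: "x \<in> carrier AutM" and h: "h \<in> inn GM"
  obtain \<alpha> where \<alpha>: "\<alpha> \<in> NA M" "x = conj_aut \<alpha>" using x unfolding AutM_simps by (rule auto_GM_conj_aut)
  obtain g where g: "g \<in> M" "h = conj_aut g" using h unfolding inn_eq by blast
  have "x \<otimes>\<^bsub>AutM\<^esub> h \<otimes>\<^bsub>AutM\<^esub> inv\<^bsub>AutM\<^esub> x = conj_aut (\<alpha> \<circ> g \<circ> inv_into UNIV \<alpha>)"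
    unfolding \<alpha>(2) g(2) inv_conj_aut[OF \<alpha>(1)] conj_aut_mult[OF \<alpha>(1) M_NA[OF g(1)]]
    using conj_aut_mult[OF NA_comp[OF \<alpha>(1) M_NA[OF g(1)]] NA_inv[OF \<alpha>(1)]] by simp
  moreover have "\<alpha> \<circ> g \<circ> inv_into UNIV \<alpha> \<in> M" using \<alpha>(1) g(1) unfolding NA_def conj_def by blast
  ultimately show "x \<otimes>\<^bsub>AutM\<^esub> h \<otimes>\<^bsub>AutM\<^esub> inv\<^bsub>AutM\<^esub> x \<in> inn GM" unfolding inn_eq by simp
qed

lemma indaff_eq_imp_M_coset:
  assumes \<alpha>: "\<alpha> \<in> NA M" and \<beta>: "\<beta> \<in> NA M" and e: "indaff M \<alpha> = indaff M \<beta>"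
  obtains g where "g \<in> M" "\<alpha> = g \<circ> \<beta>"
proof -
  obtain g1 G1 where 1: "g1 \<in> M" "G1 \<in> D4" "\<alpha> = g1 \<circ> conj \<Phi> G1" using \<alpha> by (rule NA_M_decomp)
  obtain g2 G2 where 2: "g2 \<in> M" "G2 \<in> D4" "\<beta> = g2 \<circ> conj \<Phi> G2" using \<beta> by (rule NA_M_decomp)
  have "indaff M (conj \<Phi> G1) = indaff M (conj \<Phi> G2)" using e 1 2 indaff_M_comp conj_Phi_NA by simp
  then have G: "G1 = G2" using indaff_conj_Phi_inj 1(2) 2(2) by blast
  obtain g2' where g2': "g2' \<in> M" "g2' \<circ> g2 = id" using M_inverse[OF 2(1)] by blast
  have "(g1 \<circ> g2') \<circ> \<beta> = g1 \<circ> (g2' \<circ> g2) \<circ> conj \<Phi> G1" unfolding 2(3) G by (simp only: o_assoc)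
  then have "\<alpha> = (g1 \<circ> g2') \<circ> \<beta>" using g2'(2) 1(3) by simp
  then show thesis using that M_comp[OF 1(1) g2'(1)] by blast
qed

lemma Omega_indaff:
  assumes \<alpha>: "\<alpha> \<in> NA M"
  shows "Omega M (indaff M \<alpha>) = inn GM #>\<^bsub>AutM\<^esub> conj_aut \<alpha>"
proof -
  define \<gamma> where "\<gamma> = (SOME \<gamma>. \<gamma> \<in> NA M \<and> indaff M \<gamma> = indaff M \<alpha>)"
  have "\<gamma> \<in> NA M \<and> indaff M \<gamma> = indaff M \<alpha>" unfolding \<gamma>_def by (rule someI[of _ \<alpha>]) (simp add: \<alpha>)
  then obtain g where g: "g \<in> M" "\<gamma> = g \<circ> \<alpha>" using indaff_eq_imp_M_coset \<alpha> by blast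
  have gN: "g \<in> NA M" using M_NA[OF g(1)] .
  have "Omega M (indaff M \<alpha>) = inn GM #>\<^bsub>AutM\<^esub> conj_aut \<gamma>"
    unfolding Omega_def Omega_nrm_def \<gamma>_def[symmetric] conj_aut_def ..
  also have "\<dots> = inn GM #>\<^bsub>AutM\<^esub> (conj_aut g \<otimes>\<^bsub>AutM\<^esub> conj_aut \<alpha>)"
    unfolding g(2) conj_aut_mult[OF gN \<alpha>] ..
  also have "\<dots> = (inn GM #>\<^bsub>AutM\<^esub> conj_aut g) #>\<^bsub>AutM\<^esub> conj_aut \<alpha>"
    using group.coset_mult_assoc[OF group_AutM subgroup.subset[OF inn_subgroup]
        conj_aut_carrier[OF gN] conj_aut_carrier[OF \<alpha>]] by simp
  also have "inn GM #>\<^bsub>AutM\<^esub> conj_aut g = inn GM"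
    using group.coset_join2[OF group_AutM conj_aut_carrier[OF gN] inn_subgroup] g(1) unfolding inn_eq by blast
  finally show ?thesis .
qed

lemma NA_M_centralizer_trivial:
  assumes "affine_auto \<epsilon>" "\<And>g. g \<in> M \<Longrightarrow> \<epsilon> \<circ> g = g \<circ> \<epsilon>"
  shows "\<epsilon> = id"
proof -
  have b: "bij \<epsilon>" using affine_auto_bij[OF assms(1)] .
  define \<epsilon>' where "\<epsilon>' = conj \<phi>' \<epsilon>"
  have \<epsilon>: "\<epsilon> = conj \<phi> \<epsilon>'" unfolding \<epsilon>'_def \<phi>'_def using conj_conj_inv[OF phi_bij] by simp
  have "\<epsilon>' = id"
  proof (rule pmm_std_centralizer_trivial)
    show "affine_auto \<epsilon>'"
      unfolding \<epsilon>'_def conj_def using affine_auto_comp[OF affine_auto_comp[OF phi'_affine assms(1)]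
          affine_auto_inv[OF phi'_affine]] .
    fix p assume "p \<in> pmm_std"
    then have "\<epsilon> \<circ> conj \<phi> p = conj \<phi> p \<circ> \<epsilon>" using assms(2) M_eq by blast
    then have "conj \<phi> (\<epsilon>' \<circ> p) = conj \<phi> (p \<circ> \<epsilon>')" unfolding conj_comp[OF phi_bij] \<epsilon>[symmetric] .
    then show "\<epsilon>' \<circ> p = p \<circ> \<epsilon>'" by (rule conj_inj[OF phi_bij])
  qed
  then show ?thesis using \<epsilon> conj_id_right[OF phi_bij] by simp
qed

lemma conj_aut_inj:
  assumes \<alpha>: "\<alpha> \<in> NA M" and \<gamma>: "\<gamma> \<in> NA M" and e: "conj_aut \<alpha> = conj_aut \<gamma>"
  shows "\<alpha> = \<gamma>"
proof -
  have b: "bij \<alpha>" "bij \<gamma>" using \<alpha> \<gamma> affine_auto_bij unfolding NA_def by blast+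
  define \<epsilon> where "\<epsilon> = inv_into UNIV \<gamma> \<circ> \<alpha>"
  have \<epsilon>: "\<epsilon> \<in> NA M" unfolding \<epsilon>_def using NA_comp NA_inv \<alpha> \<gamma> by blast
  have fixed: "conj \<epsilon> x = x" if x: "x \<in> M" for x
  proof -
    have "conj \<alpha> x = conj \<gamma> x" using e x unfolding conj_aut_def by (metis restrict_apply')
    then show ?thesis unfolding \<epsilon>_def using conj_conj[OF bij_imp_bij_inv[OF b(2)] b(1), of x]
        conj_inv_conj[OF b(2)] by simp
  qed
  have a: "affine_auto \<epsilon>" using \<epsilon> unfolding NA_def by blast
  have "\<epsilon> \<circ> x = x \<circ> \<epsilon>" if "x \<in> M" for x
    using conj_eq_iff[OF affine_auto_bij[OF a]] fixed[OF that] by blast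
  then have "\<epsilon> = id" by (rule NA_M_centralizer_trivial[OF a])
  moreover have "\<gamma> \<circ> inv_into UNIV \<gamma> = id" using surj_iff bij_is_surj[OF b(2)] by blast
  then have "\<gamma> \<circ> \<epsilon> = \<alpha>" unfolding \<epsilon>_def by (simp add: o_assoc)
  ultimately show ?thesis by simp
qed

lemma OutG_simps:
  "carrier (OutG GM) = rcosets\<^bsub>AutM\<^esub> (inn GM)" "mult (OutG GM) = set_mult AutM"
  unfolding OutG_def FactGroup_def by simp_all

lemma Omega_hom: "Omega M \<in> hom (AffG M) (OutG GM)"
proof (rule homI)
  fix F assume "F \<in> carrier (AffG M)"
  then obtain \<alpha> where \<alpha>: "\<alpha> \<in> NA M" "F = indaff M \<alpha>" by (rule AffG_carrierE)
  show "Omega M F \<in> carrier (OutG GM)"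
    unfolding \<alpha>(2) Omega_indaff[OF \<alpha>(1)] OutG_simps RCOSETS_def using conj_aut_carrier[OF \<alpha>(1)] by blast
next
  fix F F' assume F: "F \<in> carrier (AffG M)" and F': "F' \<in> carrier (AffG M)"
  obtain \<alpha> where \<alpha>: "\<alpha> \<in> NA M" "F = indaff M \<alpha>" using F by (rule AffG_carrierE)
  obtain \<beta> where \<beta>: "\<beta> \<in> NA M" "F' = indaff M \<beta>" using F' by (rule AffG_carrierE)
  have "Omega M (F \<otimes>\<^bsub>AffG M\<^esub> F') = inn GM #>\<^bsub>AutM\<^esub> (conj_aut \<alpha> \<otimes>\<^bsub>AutM\<^esub> conj_aut \<beta>)"
    unfolding \<alpha>(2) \<beta>(2) AffG_mult_indaff[OF \<alpha>(1) \<beta>(1)] Omega_indaff[OF NA_comp[OF \<alpha>(1) \<beta>(1)]]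
      conj_aut_mult[OF \<alpha>(1) \<beta>(1)] ..
  also have "\<dots> = (inn GM #>\<^bsub>AutM\<^esub> conj_aut \<alpha>) <#>\<^bsub>AutM\<^esub> (inn GM #>\<^bsub>AutM\<^esub> conj_aut \<beta>)"
    using normal.rcos_sum[OF inn_normal conj_aut_carrier[OF \<alpha>(1)] conj_aut_carrier[OF \<beta>(1)]] by simp
  finally show "Omega M (F \<otimes>\<^bsub>AffG M\<^esub> F') = Omega M F \<otimes>\<^bsub>OutG GM\<^esub> Omega M F'"
    unfolding \<alpha>(2) \<beta>(2) Omega_indaff[OF \<alpha>(1)] Omega_indaff[OF \<beta>(1)] OutG_simps .
qed

lemma Omega_inj: "inj_on (Omega M) (carrier (AffG M))"
proof (rule inj_onI)
  fix F F' assume F: "F \<in> carrier (AffG M)" and F': "F' \<in> carrier (AffG M)" and e: "Omega M F = Omega M F'"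
  obtain \<alpha> where \<alpha>: "\<alpha> \<in> NA M" "F = indaff M \<alpha>" using F by (rule AffG_carrierE)
  obtain \<beta> where \<beta>: "\<beta> \<in> NA M" "F' = indaff M \<beta>" using F' by (rule AffG_carrierE)
  have "conj_aut \<alpha> \<in> inn GM #>\<^bsub>AutM\<^esub> conj_aut \<alpha>"
    using group.rcos_self[OF group_AutM conj_aut_carrier[OF \<alpha>(1)] inn_subgroup] .
  then have "conj_aut \<alpha> \<in> inn GM #>\<^bsub>AutM\<^esub> conj_aut \<beta>"
    using e unfolding \<alpha>(2) \<beta>(2) Omega_indaff[OF \<alpha>(1)] Omega_indaff[OF \<beta>(1)] by simp
  then obtain g where g: "g \<in> M" "conj_aut \<alpha> = conj_aut g \<otimes>\<^bsub>AutM\<^esub> conj_aut \<beta>"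
    unfolding r_coset_def inn_eq by blast
  then have "conj_aut \<alpha> = conj_aut (g \<circ> \<beta>)" using conj_aut_mult[OF M_NA[OF g(1)] \<beta>(1)] by simp
  then have "\<alpha> = g \<circ> \<beta>" using conj_aut_inj \<alpha>(1) NA_comp[OF M_NA[OF g(1)] \<beta>(1)] by blast
  then show "F = F'" unfolding \<alpha>(2) \<beta>(2) using indaff_M_comp g(1) \<beta>(1) by simp
qed

lemma Omega_surj: "Omega M ` carrier (AffG M) = carrier (OutG GM)"
proof
  show "Omega M ` carrier (AffG M) \<subseteq> carrier (OutG GM)" using Omega_hom unfolding hom_def by blast
  show "carrier (OutG GM) \<subseteq> Omega M ` carrier (AffG M)"
  proof
    fix C assume "C \<in> carrier (OutG GM)"
    then obtain f where f: "f \<in> carrier AutM" "C = inn GM #>\<^bsub>AutM\<^esub> f"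
      unfolding OutG_simps RCOSETS_def by blast
    obtain \<alpha> where \<alpha>: "\<alpha> \<in> NA M" "f = conj_aut \<alpha>" using f(1) unfolding AutM_simps by (rule auto_GM_conj_aut)
    have "C = Omega M (indaff M \<alpha>)" unfolding f(2) \<alpha>(2) Omega_indaff[OF \<alpha>(1)] ..
    then show "C \<in> Omega M ` carrier (AffG M)" using indaff_AffG[OF \<alpha>(1)] by blast
  qed
qed

lemma Omega_iso: "Omega M \<in> iso (AffG M) (OutG GM)"
  unfolding iso_def bij_betw_def using Omega_hom Omega_inj Omega_surj by blast

end

theorem lemma12:
  fixes M :: "emap set" and c u v :: pt and s :: real
  assumes "space_group2 M"
    and "type_pmm M"
    and "quotient_is_square M c u v s"
  defines "m_ref \<equiv> refl_line c v"
    and "d_ref \<equiv> refl_line c ((1 / sqrt 2) *\<^sub>R (u + v))"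
  shows "m_ref \<in> NA M \<and> d_ref \<in> NA M
    \<and> Sym M = generate (AffG M) {indaff M m_ref, indaff M d_ref}
    \<and> card (Sym M) = 8
    \<and> Sym M = Aff M
    \<and> Omega M \<in> iso (AffG M) (OutG (map_group M))"
proof -
  obtain \<phi> where "affine_auto \<phi>" "M = conj \<phi> ` pmm_std"
    using assms(2) unfolding type_pmm_def by blast
  then interpret pmm_square M c u v s \<phi>
    using assms(3) by unfold_locales
  have "m_ref \<in> NA M" "d_ref \<in> NA M" unfolding m_ref_def d_ref_def using refl_lines_NA .
  then show ?thesis
    unfolding m_ref_def d_ref_def
    using Sym_eq_Aff generate_AffG_refl_lines card_Aff Omega_iso by simp
qed

end
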